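(* For $i=1,\dots,n$ ($n\ge 2$) let $X_i$ be a finite set with $|X_i|=m_i$ and let $P_i$ be an irreducible stochastic matrix on $X_i$ in detailed balance with a strictly positive probability measure $\pi_i$, where $P_i$ is symmetric (i.e. $\pi_i$ is uniform) for every $i\ge 2$. Let $p^0_1,\dots,p^0_n>0$ sum to $1$ and let $$P=\sum_{i=1}^np^0_i\,(I_1\otimes\cdots\otimes I_{i-1}\otimes P_i\otimes J_{i+1}\otimes\cdots\otimes J_n)$$ (the nested product). For each $i$ let $L(X_i)=\bigoplus_{k=0}^{r_i}W^i_k$ be the eigenspace decomposition of $P_i$, with $W^i_k$ of eigenvalue $\lambda^i_k$, $\lambda^i_0=1$ and $W^i_0$ the constants. Then each of the following subspaces of $L(X_1\times\cdots\times X_n)\cong L(X_1)\otimes\cdots\otimes L(X_n)$ consists of eigenvectors of $P$ with the stated eigenvalue, and $L(X_1\times\cdots\times X_n)$ is their direct sum: (i) $L(X_1)\otimes\cdots\otimes L(X_{n-1})\otimes W^n_{k_n}$, $k_n=1,\dots,r_n$, with eigenvalue $p^0_n\lambda^n_{k_n}$ and dimension $m_1\cdots m_{n-1}\dim W^n_{k_n}$; (ii) $L(X_1)\otimes\cdots\otimes L(X_j)\otimes W^{j+1}_{k_{j+1}}\otimes W^{j+2}_0\otimes\cdots\otimes W^n_0$, for $j=1,\dots,n-2$ and $k_{j+1}=1,\dots,r_{j+1}$, with eigenvalue $p^0_{j+1}\lambda^{j+1}_{k_{j+1}}+p^0_{j+2}+\cdots+p^0_n$ and dimension $m_1\cdots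 m_j\dim W^{j+1}_{k_{j+1}}$; (iii) $W^1_{k_1}\otimes W^2_0\otimes\cdots\otimes W^n_0$, for $k_1=0,1,\dots,r_1$, with eigenvalue $p^0_1\lambda^1_{k_1}+p^0_2+\cdots+p^0_n$ and dimension $\dim W^1_{k_1}$.
   Context: $I_i$ is the identity matrix on $X_i$ and $J_i$ the $m_i\times m_i$ matrix with all entries $1/m_i$; explicitly $p(x,y)=\sum_{i=1}^np^0_i(\prod_{j<i}\delta(x_j,y_j))p_i(x_i,y_i)/\prod_{j>i}m_j$. Operators act on functions by $(Pf)(x)=\sum_yp(x,y)f(y)$; $(f_1\otimes\cdots\otimes f_n)(x)=\prod_if_i(x_i)$. Detailed balance: $\pi_i(x)p_i(x,y)=\pi_i(y)p_i(y,x)$. *)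

theory Defs
  imports Complex_Main "HOL-Library.FuncSet" "HOL-Library.Function_Algebras"
begin

definition fscale :: "real \<Rightarrow> ('b \<Rightarrow> real) \<Rightarrow> ('b \<Rightarrow> real)" where
  "fscale c f = (\<lambda>x. c * f x)"

text \<open>L(A): real functions on the finite set A (extended by 0 outside A).\<close>
definition Lfun :: "'b set \<Rightarrow> ('b \<Rightarrow> real) set" where
  "Lfun A = {f. \<forall>x. x \<notin> A \<longrightarrow> f x = 0}"

definition apply_kernel :: "'b set \<Rightarrow> ('b \<Rightarrow> 'b \<Rightarrow> real) \<Rightarrow> ('b \<Rightarrow> real) \<Rightarrow> ('b \<Rightarrow> real)" where
  "apply_kernel A p f = (\<lambda>x. if x \<in> A then (\<Sum>y\<in>A. p x y * f y) else 0)"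

fun kpow :: "'b set \<Rightarrow> ('b \<Rightarrow> 'b \<Rightarrow> real) \<Rightarrow> nat \<Rightarrow> 'b \<Rightarrow> 'b \<Rightarrow> real" where
  "kpow A p 0 x y = (if x = y then 1 else 0)"
| "kpow A p (Suc k) x y = (\<Sum>z\<in>A. p x z * kpow A p k z y)"

definition stochastic :: "'b set \<Rightarrow> ('b \<Rightarrow> 'b \<Rightarrow> real) \<Rightarrow> bool" where
  "stochastic A p \<longleftrightarrow> (\<forall>x\<in>A. \<forall>y\<in>A. p x y \<ge> 0) \<and> (\<forall>x\<in>A. (\<Sum>y\<in>A. p x y) = 1)"

definition irreducible_kernel :: "'b set \<Rightarrow> ('b \<Rightarrow> 'b \<Rightarrow> real) \<Rightarrow> bool" where
  "irreducible_kernel A p \<longleftrightarrow> (\<forall>x\<in>A. \<forall>y\<in>A. \<exists>k. kpow A p k x y > 0)"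

definition positive_prob :: "'b set \<Rightarrow> ('b \<Rightarrow> real) \<Rightarrow> bool" where
  "positive_prob A \<pi> \<longleftrightarrow> (\<forall>x\<in>A. \<pi> x > 0) \<and> (\<Sum>x\<in>A. \<pi> x) = 1"

definition detailed_balance :: "'b set \<Rightarrow> ('b \<Rightarrow> real) \<Rightarrow> ('b \<Rightarrow> 'b \<Rightarrow> real) \<Rightarrow> bool" where
  "detailed_balance A \<pi> p \<longleftrightarrow> (\<forall>x\<in>A. \<forall>y\<in>A. \<pi> x * p x y = \<pi> y * p y x)"

definition eigvals :: "'b set \<Rightarrow> ('b \<Rightarrow> 'b \<Rightarrow> real) \<Rightarrow> real set" where
  "eigvals A p = {lam. \<exists>f\<in>Lfun A. f \<noteq> (\<lambda>_. 0) \<and> apply_kernel A p f = fscale lam f}"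

definition eigspace :: "'b set \<Rightarrow> ('b \<Rightarrow> 'b \<Rightarrow> real) \<Rightarrow> real \<Rightarrow> ('b \<Rightarrow> real) set" where
  "eigspace A p lam = {f\<in>Lfun A. apply_kernel A p f = fscale lam f}"

abbreviation prodX :: "nat \<Rightarrow> (nat \<Rightarrow> 'a set) \<Rightarrow> (nat \<Rightarrow> 'a) set" where
  "prodX n X \<equiv> Pi\<^sub>E {1..n} X"

definition nested_kernel :: "nat \<Rightarrow> (nat \<Rightarrow> 'a set) \<Rightarrow> (nat \<Rightarrow> real) \<Rightarrow> (nat \<Rightarrow> 'a \<Rightarrow> 'a \<Rightarrow> real)
    \<Rightarrow> (nat \<Rightarrow> 'a) \<Rightarrow> (nat \<Rightarrow> 'a) \<Rightarrow> real" where
  "nested_kernel n X p0 p x y =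
     (\<Sum>i\<in>{1..n}. p0 i * (\<Prod>j\<in>{1..<i}. if x j = y j then 1 else 0) * p i (x i) (y i)
        / (\<Prod>j\<in>{i<..n}. real (card (X j))))"

text \<open>Tensor product V_1 (x) ... (x) V_n of subspaces V_i of L(X_i), as the subspace of
  L(X_1 x ... x X_n) spanned by the elementary tensors f_1 (x) ... (x) f_n.\<close>
definition tensor_sub :: "nat \<Rightarrow> (nat \<Rightarrow> 'a set) \<Rightarrow> (nat \<Rightarrow> ('a \<Rightarrow> real) set) \<Rightarrow> ((nat \<Rightarrow> 'a) \<Rightarrow> real) set" where
  "tensor_sub n X V = module.span fscale
     {(\<lambda>x. if x \<in> prodX n X then (\<Prod>i\<in>{1..n}. f i (x i)) else 0) | f. \<forall>i\<in>{1..n}. f i \<in> V i}"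

text \<open>L(X_1) (x) ... (x) L(X_{i-1}) (x) W^i(lam) (x) W^{i+1}_0 (x) ... (x) W^n_0,
  where W^j_0 is the eigenspace of P_j for the eigenvalue 1.\<close>
definition block_sub :: "nat \<Rightarrow> (nat \<Rightarrow> 'a set) \<Rightarrow> (nat \<Rightarrow> 'a \<Rightarrow> 'a \<Rightarrow> real) \<Rightarrow> nat \<Rightarrow> real
    \<Rightarrow> ((nat \<Rightarrow> 'a) \<Rightarrow> real) set" where
  "block_sub n X p i lam = tensor_sub n X (\<lambda>j. if j < i then Lfun (X j)
      else if j = i then eigspace (X i) (p i) lam else eigspace (X j) (p j) 1)"

definition is_direct_sum :: "('b \<Rightarrow> real) set \<Rightarrow> 'k set \<Rightarrow> ('k \<Rightarrow> ('b \<Rightarrow> real) set) \<Rightarrow> bool" where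
  "is_direct_sum U I V \<longleftrightarrow> finite I \<and> (\<forall>k\<in>I. V k \<subseteq> U) \<and>
     (\<forall>f\<in>U. \<exists>!g. (\<forall>k\<in>I. g k \<in> V k) \<and> (\<forall>k. k \<notin> I \<longrightarrow> g k = (\<lambda>_. 0)) \<and>
                  f = (\<lambda>x. \<Sum>k\<in>I. g k x))"

end

theory Submission
  imports Defs "HOL-Analysis.Analysis"
begin

text \<open>Each \<open>P\<^sub>i\<close> is self-adjoint for the inner product on \<open>L(X\<^sub>i)\<close> weighted by \<open>\<pi>\<^sub>i\<close>, so
  \<open>L(X\<^sub>i)\<close> has an orthogonal eigenbasis (built by maximising the Rayleigh quotient on
  invariant subspaces). Irreducibility makes the eigenvalue \<open>1\<close> simple with the constants as
  eigenvectors, and for \<open>i \<ge> 2\<close> symmetry makes every other eigenvector sum to zero.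
  The elementary tensors \<open>b\<^sub>1 \<otimes> \<dots> \<otimes> b\<^sub>n\<close> of basis vectors form an orthogonal basis of
  \<open>L(X\<^sub>1 \<times> \<dots> \<times> X\<^sub>n)\<close>, and the \<open>k\<close>-th summand of \<open>P\<close> acts on them factorwise by \<open>I\<close>, \<open>P\<^sub>k\<close>
  and \<open>J\<close>. If \<open>i\<close> is the last index with \<open>b\<^sub>i\<close> non-constant, then \<open>J b\<^sub>i = 0\<close> kills the
  summands \<open>k < i\<close>, while each summand \<open>k \<ge> i\<close> multiplies the tensor by \<open>p\<^sup>0\<^sub>k\<close> times the
  eigenvalue of \<open>b\<^sub>k\<close>. Grouping the tensor basis by \<open>i\<close> and the eigenvalue of \<open>b\<^sub>i\<close> yields
  the blocks; they are mutually orthogonal, hence form a direct sum, and counting basis vectors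
  gives their dimensions.\<close>

interpretation fs: vector_space "fscale :: real \<Rightarrow> ('b \<Rightarrow> real) \<Rightarrow> ('b \<Rightarrow> real)"
  by unfold_locales (auto simp: fscale_def fun_eq_iff algebra_simps)

lemma fscale_apply [simp]: "fscale c f x = c * f x"
  by (simp add: fscale_def)

lemma sum_fun_apply: "(\<Sum>i\<in>S. f i) x = (\<Sum>i\<in>S. f i x)"
  by (induction S rule: infinite_finite_induct) auto

lemma Lfun_subspace: "fs.subspace (Lfun A)"
  by (auto simp: fs.subspace_def Lfun_def)

section \<open>Weighted inner product\<close>

definition wdot :: "'b set \<Rightarrow> ('b \<Rightarrow> real) \<Rightarrow> ('b \<Rightarrow> real) \<Rightarrow> ('b \<Rightarrow> real) \<Rightarrow> real" where
  "wdot A w f g = (\<Sum>x\<in>A. w x * f x * g x)"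

lemma wdot_commute: "wdot A w f g = wdot A w g f"
  by (simp add: wdot_def mult_ac)

lemma wdot_add_left: "wdot A w (f + g) h = wdot A w f h + wdot A w g h"
  by (simp add: wdot_def algebra_simps sum.distrib)

lemma wdot_add_right: "wdot A w h (f + g) = wdot A w h f + wdot A w h g"
  by (simp add: wdot_def algebra_simps sum.distrib)

lemma wdot_diff_left: "wdot A w (f - g) h = wdot A w f h - wdot A w g h"
  by (simp add: wdot_def algebra_simps sum_subtractf)

lemma wdot_scale_left: "wdot A w (fscale c f) h = c * wdot A w f h"
  by (simp add: wdot_def algebra_simps sum_distrib_left)

lemma wdot_scale_right: "wdot A w h (fscale c f) = c * wdot A w h f"
  by (simp add: wdot_def algebra_simps sum_distrib_left)

lemma wdot_zero_left [simp]: "wdot A w 0 h = 0"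
  by (simp add: wdot_def)

lemma wdot_sum_left: "wdot A w (\<Sum>b\<in>B. F b) c = (\<Sum>b\<in>B. wdot A w (F b) c)"
  unfolding wdot_def sum_fun_apply
  by (simp add: sum_distrib_left sum_distrib_right sum.swap[of _ A])

lemma wdot_self_ge:
  assumes "\<forall>y\<in>A. w y > 0" "finite A" "x \<in> A"
  shows "w x * f x * f x \<le> wdot A w f f"
  unfolding wdot_def
proof (rule member_le_sum[OF assms(3) _ assms(2)])
  show "0 \<le> w y * f y * f y" if "y \<in> A - {x}" for y
    using assms(1) that by (metis DiffD1 less_eq_real_def mult_nonneg_nonneg mult.assoc zero_le_square)
qed

lemma wdot_self_pos:
  assumes "finite A" "\<forall>x\<in>A. w x > 0" "f \<in> Lfun A" "f \<noteq> 0"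
  shows "wdot A w f f > 0"
proof -
  obtain x where x: "f x \<noteq> 0" using assms(4) by (auto simp: fun_eq_iff)
  then have "x \<in> A" using assms(3) by (auto simp: Lfun_def)
  with x assms(2) have "0 < w x * f x * f x"
    by (metis mult.assoc mult_pos_pos not_real_square_gt_zero)
  also have "\<dots> \<le> wdot A w f f" by (rule wdot_self_ge[OF assms(2,1) \<open>x \<in> A\<close>])
  finally show ?thesis .
qed

lemma wdot_self_eq_0:
  assumes "finite A" "\<forall>x\<in>A. w x > 0" "f \<in> Lfun A" "wdot A w f f = 0"
  shows "f = 0"
  using wdot_self_pos[OF assms(1-3)] assms(4) by force

lemma wdot_span_eq_0:
  assumes "\<forall>a\<in>S. wdot A w a g = 0" "v \<in> fs.span S"
  shows "wdot A w v g = 0"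
  using assms(2)
proof (induction rule: fs.span_induct_alt)
  case (step c x y)
  have e: "wdot A w (fscale c x + y) g = c * wdot A w x g + wdot A w y g"
    by (simp only: wdot_add_left wdot_scale_left)
  show ?case unfolding e using step assms(1) by simp
qed (simp add: wdot_def)

lemma pairwise_orthogonal_independent:
  assumes "finite A" "\<forall>x\<in>A. w x > 0" "S \<subseteq> Lfun A" "0 \<notin> S"
    and "pairwise (\<lambda>a b. wdot A w a b = 0) S"
  shows "fs.independent S"
proof
  assume "fs.dependent S"
  then obtain a where a: "a \<in> S" "a \<in> fs.span (S - {a})" unfolding fs.dependent_def by blast
  have "wdot A w a a = 0"
    by (rule wdot_span_eq_0[OF _ a(2)]) (use assms(5) a(1) in \<open>auto simp: pairwise_def\<close>)
  then show False using wdot_self_eq_0[OF assms(1,2)] a(1) assms(3,4) by auto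
qed

text \<open>The orthogonal projection onto \<open>span B\<close>, provided \<open>B\<close> is pairwise orthogonal.\<close>
definition oproj :: "'b set \<Rightarrow> ('b \<Rightarrow> real) \<Rightarrow> ('b \<Rightarrow> real) set \<Rightarrow> ('b \<Rightarrow> real) \<Rightarrow> ('b \<Rightarrow> real)" where
  "oproj A w B f = (\<Sum>b\<in>B. fscale (wdot A w f b / wdot A w b b) b)"

lemma oproj_in_span: "oproj A w B f \<in> fs.span B"
  unfolding oproj_def by (intro fs.span_sum fs.span_scale fs.span_base)

lemma oproj_in_Lfun: "B \<subseteq> Lfun A \<Longrightarrow> oproj A w B f \<in> Lfun A"
  using oproj_in_span fs.span_minimal[OF _ Lfun_subspace] by blast

lemma wdot_minus_oproj:
  assumes "finite A" "\<forall>x\<in>A. w x > 0" "B \<subseteq> Lfun A" "finite B"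
    and orth: "pairwise (\<lambda>a b. wdot A w a b = 0) B" and c: "c \<in> B"
  shows "wdot A w (f - oproj A w B f) c = 0"
proof -
  have "wdot A w (oproj A w B f) c = (\<Sum>b\<in>B. wdot A w f b / wdot A w b b * wdot A w b c)"
    unfolding oproj_def by (simp add: wdot_sum_left wdot_scale_left del: fscale_apply)
  also have "\<dots> = wdot A w f c / wdot A w c c * wdot A w c c"
    using assms(4) c orth by (subst sum.remove[of _ c]) (auto intro!: sum.neutral simp: pairwise_def)
  also have "\<dots> = wdot A w f c"
  proof (cases "c = 0")
    case False
    then have "wdot A w c c \<noteq> 0" using wdot_self_pos[OF assms(1,2)] assms(3) c by fastforce
    then show ?thesis by simp
  qed (simp add: wdot_commute)
  finally show ?thesis by (simp add: wdot_diff_left)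
qed

lemma oproj_eq_self:
  assumes "finite A" "\<forall>x\<in>A. w x > 0" "B \<subseteq> Lfun A" "finite B"
    and orth: "pairwise (\<lambda>a b. wdot A w a b = 0) B" and f: "f \<in> fs.span B"
  shows "oproj A w B f = f"
proof -
  define h where "h = f - oproj A w B f"
  have h: "h \<in> fs.span B" unfolding h_def using f oproj_in_span by (rule fs.span_diff)
  have "wdot A w h c = 0" if "c \<in> B" for c
    unfolding h_def using wdot_minus_oproj[OF assms(1-5) that] .
  then have "wdot A w h h = 0"
    using wdot_span_eq_0[OF _ h, of A w h] by (simp add: wdot_commute)
  moreover have "h \<in> Lfun A" using h fs.span_minimal[OF assms(3) Lfun_subspace] by blast
  ultimately have "h = 0" using wdot_self_eq_0[OF assms(1,2)] by blast
  then show ?thesis by (simp add: h_def)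
qed

definition delta :: "'b \<Rightarrow> 'b \<Rightarrow> real" where
  "delta y = (\<lambda>x. if x = y then 1 else 0)"

lemma Lfun_subset_span_delta:
  assumes "finite A"
  shows "Lfun A \<subseteq> fs.span (delta ` A)"
proof
  fix f assume f: "f \<in> Lfun A"
  have "f = (\<Sum>y\<in>A. fscale (f y) (delta y))"
    using f assms by (auto simp: fun_eq_iff sum_fun_apply delta_def Lfun_def if_distrib[of "\<lambda>t. f _ * t"]
        cong: if_cong)
  also have "\<dots> \<in> fs.span (delta ` A)"
    by (intro fs.span_sum fs.span_scale fs.span_base) auto
  finally show "f \<in> fs.span (delta ` A)" .
qed

lemma card_delta: "card (delta ` A) = card A"
  by (rule card_image) (auto simp: inj_on_def delta_def fun_eq_iff split: if_splits)

lemma independent_delta: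
  assumes "finite A"
  shows "fs.independent (delta ` A)"
proof (rule pairwise_orthogonal_independent[OF assms, of "\<lambda>_. 1"])
  show "0 \<notin> delta ` A" by (auto simp: delta_def fun_eq_iff) (metis zero_neq_one)
  show "pairwise (\<lambda>a b. wdot A (\<lambda>_. 1) a b = 0) (delta ` A)"
    by (auto simp: pairwise_def wdot_def delta_def intro!: sum.neutral)
qed (auto simp: delta_def Lfun_def)

lemma independent_Lfun_card_le:
  assumes "finite A" "S \<subseteq> Lfun A" "fs.independent S"
  shows "finite S" "card S \<le> card A"
proof -
  have "S \<subseteq> fs.span (delta ` A)" using Lfun_subset_span_delta[OF assms(1)] assms(2) by blast
  from fs.independent_span_bound[OF finite_imageI[OF assms(1)] assms(3) this]
  show "finite S" "card S \<le> card A" by (simp_all add: card_delta)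
qed

lemma Lfun_subset_span_independent:
  assumes "finite A" "S \<subseteq> Lfun A" "fs.independent S" "card S = card A"
  shows "Lfun A \<subseteq> fs.span S"
proof
  fix a assume a: "a \<in> Lfun A"
  show "a \<in> fs.span S"
  proof (rule ccontr)
    assume "a \<notin> fs.span S"
    then have "fs.independent (insert a S)" "a \<notin> S"
      using assms(3) fs.span_base by (auto simp: fs.independent_insert)
    then show False
      using independent_Lfun_card_le[OF assms(1) _ \<open>fs.independent (insert a S)\<close>]
        independent_Lfun_card_le[OF assms(1-3)] a assms(2,4) by auto
  qed
qed

section \<open>Self-adjoint kernels and orthogonal eigenbases\<close>

lemma apply_kernel_in_Lfun: "apply_kernel A p f \<in> Lfun A"
  by (simp add: apply_kernel_def Lfun_def)

lemma apply_kernel_apply: "x \<in> A \<Longrightarrow> apply_kernel A p f x = (\<Sum>y\<in>A. p x y * f y)"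
  by (simp add: apply_kernel_def)

lemma apply_kernel_add: "apply_kernel A p (f + g) = apply_kernel A p f + apply_kernel A p g"
  by (auto simp: apply_kernel_def fun_eq_iff algebra_simps sum.distrib)

lemma apply_kernel_scale: "apply_kernel A p (fscale c f) = fscale c (apply_kernel A p f)"
  by (auto simp: apply_kernel_def fun_eq_iff algebra_simps sum_distrib_left)

lemma apply_kernel_zero [simp]: "apply_kernel A p 0 = 0"
  by (auto simp: apply_kernel_def fun_eq_iff)

lemma wdot_apply_kernel_left:
  "wdot A w (apply_kernel A p f) g = (\<Sum>x\<in>A. \<Sum>y\<in>A. w x * p x y * f y * g x)"
  unfolding wdot_def
  by (intro sum.cong refl) (simp add: apply_kernel_apply sum_distrib_left sum_distrib_right mult_ac)

lemma wdot_apply_kernel: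
  assumes "detailed_balance A w p"
  shows "wdot A w (apply_kernel A p f) g = wdot A w f (apply_kernel A p g)"
proof -
  have "wdot A w (apply_kernel A p f) g = (\<Sum>x\<in>A. \<Sum>y\<in>A. w y * p y x * f y * g x)"
    unfolding wdot_apply_kernel_left
    using assms by (intro sum.cong refl) (simp add: detailed_balance_def)
  also have "\<dots> = wdot A w (apply_kernel A p g) f"
    unfolding wdot_apply_kernel_left by (subst sum.swap) (simp add: mult_ac)
  finally show ?thesis by (simp add: wdot_commute)
qed

lemma eigenvectors_orthogonal:
  assumes "detailed_balance A w p"
    and "apply_kernel A p f = fscale l1 f" "apply_kernel A p g = fscale l2 g" "l1 \<noteq> l2"
  shows "wdot A w f g = 0"
proof -
  have "l1 * wdot A w f g = l2 * wdot A w f g"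
    using wdot_apply_kernel[OF assms(1), of f g] assms(2,3)
    by (simp add: wdot_scale_left wdot_scale_right del: fscale_apply)
  then show ?thesis using assms(4) by simp
qed

lemma eigspace_subspace: "fs.subspace (eigspace A p lam)"
  unfolding fs.subspace_def eigspace_def
  using Lfun_subspace[of A, unfolded fs.subspace_def]
  by (auto simp: apply_kernel_add apply_kernel_scale fs.scale_right_distrib mult.commute
      simp del: fscale_apply plus_fun_apply)

lemma nonpos_quadratic_linear_coeff_eq_0:
  fixes a c :: real
  assumes "\<forall>t. t * a + t^2 * c \<le> 0"
  shows "a = 0"
proof (rule ccontr)
  assume "a \<noteq> 0"
  define t where "t = a / (\<bar>c\<bar> + 1)"
  have "(a/k)*a - (a/k)^2*(k-1) = a^2/k^2" if "k > 0" for k :: real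
    using that by (simp add: field_simps power2_eq_square)
  from this[of "\<bar>c\<bar> + 1"] have "0 < t * a - t^2 * \<bar>c\<bar>"
    using \<open>a \<noteq> 0\<close> unfolding t_def by simp
  also have "\<dots> \<le> t * a + t^2 * c"
    by (smt (verit) abs_ge_minus_self mult_left_mono zero_le_power2 mult_minus_right)
  finally show False using assms by (smt (verit))
qed

lemma rayleigh_le_of_max_on_sphere:
  assumes fin: "finite A" and wpos: "\<forall>x\<in>A. w x > 0"
    and U: "fs.subspace U" "U \<subseteq> Lfun A"
    and max: "\<forall>g\<in>U. wdot A w g g = 1 \<longrightarrow> wdot A w (apply_kernel A p g) g \<le> \<mu>"
    and g: "g \<in> U"
  shows "wdot A w (apply_kernel A p g) g \<le> \<mu> * wdot A w g g"
proof (cases "g = 0")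
  case False
  define c where "c = wdot A w g g"
  have c: "c > 0" unfolding c_def using wdot_self_pos[OF fin wpos _ False] g U(2) by blast
  let ?g = "fscale (1 / sqrt c) g"
  have "?g \<in> U" by (rule fs.subspace_scale[OF U(1) g])
  moreover have "wdot A w ?g ?g = 1"
    using c by (simp add: wdot_scale_left wdot_scale_right c_def del: fscale_apply)
  ultimately have "wdot A w (apply_kernel A p ?g) ?g \<le> \<mu>" using max by blast
  then show ?thesis
    using c by (simp add: apply_kernel_scale wdot_scale_left wdot_scale_right c_def[symmetric]
        field_simps del: fscale_apply)
qed simp

text \<open>Maximising the Rayleigh quotient over the unit sphere of an invariant subspace yields an
  eigenvector: perturbing the maximiser \<open>u\<close> along \<open>v = K u - R(u) u\<close> gives a quadratic in the
  perturbation parameter whose linear coefficient \<open>2\<langle>v,v\<rangle>\<close> must therefore vanish.\<close>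
lemma rayleigh_maximiser_eigenvector:
  assumes fin: "finite A" and wpos: "\<forall>x\<in>A. w x > 0" and db: "detailed_balance A w p"
    and U: "fs.subspace U" "U \<subseteq> Lfun A" and inv: "\<forall>f\<in>U. apply_kernel A p f \<in> U"
    and u: "u \<in> U" "wdot A w u u = 1"
    and max: "\<forall>g\<in>U. wdot A w g g = 1 \<longrightarrow>
                 wdot A w (apply_kernel A p g) g \<le> wdot A w (apply_kernel A p u) u"
  shows "apply_kernel A p u = fscale (wdot A w (apply_kernel A p u) u) u"
proof -
  let ?K = "apply_kernel A p" and ?ip = "wdot A w"
  define R where "R f = ?ip (?K f) f" for f
  define \<mu> where "\<mu> = R u"
  have R_le: "R g \<le> \<mu> * ?ip g g" if "g \<in> U" for g
    unfolding R_def \<mu>_def using rayleigh_le_of_max_on_sphere[OF fin wpos U max that] .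
  define v where "v = ?K u - fscale \<mu> u"
  have vU: "v \<in> U" unfolding v_def
    using inv u(1) by (intro fs.subspace_diff[OF U(1)] fs.subspace_scale[OF U(1)]) auto
  have vu: "?ip v u = 0" unfolding v_def
    by (simp add: wdot_diff_left wdot_scale_left u(2) \<mu>_def R_def del: fscale_apply)
  define a where "a = ?ip v v"
  have Kuv: "?ip (?K u) v = a"
  proof -
    have "?K u = v + fscale \<mu> u" unfolding v_def by simp
    then show ?thesis
      by (simp add: wdot_add_left wdot_scale_left a_def wdot_commute[of A w u v] vu
          del: fscale_apply plus_fun_apply)
  qed
  have Kvu: "?ip (?K v) u = a"
    using wdot_apply_kernel[OF db, of v u] Kuv wdot_commute[of A w v "?K u"] by simp
  have "t * (2 * a) + t^2 * (R v - \<mu> * a) \<le> 0" for t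
  proof -
    define g where "g = u + fscale t v"
    have "g \<in> U" unfolding g_def using vU u(1) by (intro fs.subspace_add[OF U(1)] fs.subspace_scale[OF U(1)])
    then have "R g \<le> \<mu> * ?ip g g" by (rule R_le)
    moreover have "?ip g g = 1 + t^2 * a"
      unfolding g_def
      by (simp only: wdot_add_left wdot_add_right wdot_scale_left wdot_scale_right u(2) vu)
        (simp add: wdot_commute[of A w u v] vu a_def power2_eq_square)
    moreover have "R g = \<mu> + 2 * t * a + t^2 * R v"
      unfolding g_def R_def
      by (simp only: apply_kernel_add apply_kernel_scale wdot_add_left wdot_add_right wdot_scale_left
          wdot_scale_right Kuv Kvu)
        (simp add: \<mu>_def R_def power2_eq_square algebra_simps)
    ultimately show ?thesis by (simp add: algebra_simps)
  qed
  then have "2 * a = 0" by (intro nonpos_quadratic_linear_coeff_eq_0) blast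
  then have "v = 0" using wdot_self_eq_0[OF fin wpos] vU U(2) by (auto simp: a_def)
  then show ?thesis by (simp add: v_def \<mu>_def R_def)
qed

lemma continuous_on_apply [continuous_intros]: "continuous_on S (\<lambda>f::'b \<Rightarrow> real. f x)"
  by (rule continuous_on_subset[OF continuous_on_product_coordinates]) simp

lemma continuous_on_wdot [continuous_intros]:
  assumes "continuous_on S F" "continuous_on S G"
  shows "continuous_on S (\<lambda>f. wdot A w (F f) (G f))"
proof -
  have "continuous_on S (\<lambda>f. H f x)" if "continuous_on S H" for H :: "_ \<Rightarrow> _ \<Rightarrow> real" and x
    using continuous_on_compose2[OF continuous_on_apply[of UNIV x] that] by simp
  with assms show ?thesis unfolding wdot_def by (intro continuous_intros)
qed

lemma compact_wdot_sphere:
  assumes fin: "finite A" and wpos: "\<forall>x\<in>A. w x > 0"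
  shows "compact {f \<in> Lfun A. wdot A w f f = 1}"
proof -
  define r where "r x = 1 + 1 / w x" for x
  define box where "box = PiE UNIV (\<lambda>x. if x \<in> A then {- r x..r x} else {0::real})"
  have "compactin (product_topology (\<lambda>_. euclidean) UNIV) box"
    unfolding box_def compactin_PiE by auto
  then have "compact box" by (simp add: euclidean_product_topology)
  moreover have "closed {f. wdot A w f f = 1}"
    by (intro closed_Collect_eq continuous_intros continuous_on_id)
  moreover have "{f \<in> Lfun A. wdot A w f f = 1} = box \<inter> {f. wdot A w f f = 1}"
  proof (intro equalityI subsetI)
    fix f assume f: "f \<in> {f \<in> Lfun A. wdot A w f f = 1}"
    have "\<bar>f x\<bar> \<le> r x" if x: "x \<in> A" for x
    proof (rule ccontr)
      assume "\<not> \<bar>f x\<bar> \<le> r x"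
      moreover have wx: "1 / w x > 0" "w x > 0" using wpos x by simp_all
      ultimately have "1 < \<bar>f x\<bar>" "1 / w x < \<bar>f x\<bar>" unfolding r_def by linarith+
      moreover from this(2) have "1 < w x * \<bar>f x\<bar>"
        by (simp add: pos_divide_less_eq[OF wx(2)] mult.commute)
      ultimately have "1 < w x * \<bar>f x\<bar> * \<bar>f x\<bar>" by (simp add: less_1_mult)
      also have "\<dots> = w x * f x * f x" by (simp add: abs_mult_self_eq mult.assoc)
      also have "\<dots> \<le> 1" using wdot_self_ge[OF wpos fin x, of f] f by simp
      finally show False by simp
    qed
    then have "\<forall>x\<in>A. - r x \<le> f x \<and> f x \<le> r x" by (metis abs_le_iff minus_le_iff)
    then show "f \<in> box \<inter> {f. wdot A w f f = 1}"
      using f unfolding box_def Lfun_def PiE_iff by auto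
  next
    fix f assume "f \<in> box \<inter> {f. wdot A w f f = 1}"
    then show "f \<in> {f \<in> Lfun A. wdot A w f f = 1}"
      unfolding box_def Lfun_def PiE_iff by (auto split: if_splits)
  qed
  ultimately show ?thesis by (simp add: compact_Int_closed)
qed

lemma eigenvector_orthogonal_exists:
  assumes fin: "finite A" and wpos: "\<forall>x\<in>A. w x > 0" and db: "detailed_balance A w p"
    and S: "\<forall>s\<in>S. apply_kernel A p s = fscale (ev s) s"
    and u0: "u0 \<in> Lfun A" "u0 \<noteq> 0" "\<forall>s\<in>S. wdot A w u0 s = 0"
  obtains u \<mu> where "u \<in> Lfun A" "u \<noteq> 0" "\<forall>s\<in>S. wdot A w u s = 0"
    "apply_kernel A p u = fscale \<mu> u"
proof -
  let ?K = "apply_kernel A p" and ?ip = "wdot A w"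
  define U where "U = {f \<in> Lfun A. \<forall>s\<in>S. ?ip f s = 0}"
  define C where "C = {f \<in> Lfun A. ?ip f f = 1} \<inter> (\<Inter>s\<in>S. {f. ?ip f s = 0})"
  have U: "fs.subspace U"
    unfolding fs.subspace_def U_def
    using Lfun_subspace[of A, unfolded fs.subspace_def]
    by (simp add: wdot_add_left wdot_scale_left del: plus_fun_apply fscale_apply)
  have inv: "\<forall>f\<in>U. ?K f \<in> U"
  proof
    fix f assume "f \<in> U"
    then have "?ip (?K f) s = 0" if "s \<in> S" for s
      using that S wdot_apply_kernel[OF db, of f s] by (simp add: U_def wdot_scale_right)
    then show "?K f \<in> U" by (simp add: U_def apply_kernel_in_Lfun)
  qed
  have "compact C"
    unfolding C_def using compact_wdot_sphere[OF fin wpos]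
    by (intro compact_Int_closed closed_INT ballI closed_Collect_eq continuous_intros continuous_on_id)
  moreover have CU: "C = {f \<in> U. ?ip f f = 1}" by (auto simp: C_def U_def)
  have "fscale (1 / sqrt (?ip u0 u0)) u0 \<in> C"
    using wdot_self_pos[OF fin wpos u0(1,2)] fs.subspace_scale[OF U, of u0] u0
    by (simp add: CU U_def wdot_scale_left wdot_scale_right del: fscale_apply)
  then have "C \<noteq> {}" by blast
  moreover have "continuous_on C (\<lambda>f. ?ip (?K f) f)"
    unfolding wdot_apply_kernel_left by (intro continuous_intros)
  ultimately obtain u where uC: "u \<in> C" and umax: "\<forall>g\<in>C. ?ip (?K g) g \<le> ?ip (?K u) u"
    using continuous_attains_sup by blast
  have "?K u = fscale (?ip (?K u) u) u"
    using uC umax by (intro rayleigh_maximiser_eigenvector[OF fin wpos db U _ inv])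
      (auto simp: CU U_def)
  moreover have "u \<noteq> 0" using uC by (auto simp: C_def)
  ultimately show ?thesis using that uC by (auto simp: C_def)
qed

definition orth_eigenbasis ::
    "'b set \<Rightarrow> ('b \<Rightarrow> real) \<Rightarrow> ('b \<Rightarrow> 'b \<Rightarrow> real) \<Rightarrow> ('b \<Rightarrow> real) set \<Rightarrow> (('b \<Rightarrow> real) \<Rightarrow> real) \<Rightarrow> bool" where
  "orth_eigenbasis A w p B ev \<longleftrightarrow> B \<subseteq> Lfun A \<and> finite B \<and> card B = card A \<and> 0 \<notin> B \<and>
     pairwise (\<lambda>a b. wdot A w a b = 0) B \<and> (\<forall>b\<in>B. apply_kernel A p b = fscale (ev b) b)"

lemma orth_eigenfamily_extend:
  assumes fin: "finite A" and wpos: "\<forall>x\<in>A. w x > 0" and db: "detailed_balance A w p"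
    and B: "B \<subseteq> Lfun A" "finite B" "0 \<notin> B" "card B < card A"
    and orth: "pairwise (\<lambda>a b. wdot A w a b = 0) B"
    and eig: "\<forall>b\<in>B. apply_kernel A p b = fscale (ev b) b"
  obtains u \<mu> where "u \<in> Lfun A" "u \<noteq> 0" "u \<notin> B" "\<forall>b\<in>B. wdot A w u b = 0"
    "apply_kernel A p u = fscale \<mu> u"
proof -
  have "\<not> Lfun A \<subseteq> fs.span B"
  proof
    assume "Lfun A \<subseteq> fs.span B"
    then have "delta ` A \<subseteq> fs.span B" by (auto simp: delta_def Lfun_def)
    from fs.independent_span_bound[OF B(2) independent_delta[OF fin] this]
    show False using B(4) card_delta[of A] by simp
  qed
  then obtain f where f: "f \<in> Lfun A" "f \<notin> fs.span B" by blast
  define u0 where "u0 = f - oproj A w B f"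
  have "u0 \<in> Lfun A"
    unfolding u0_def using f(1) oproj_in_Lfun[OF B(1)] by (rule fs.subspace_diff[OF Lfun_subspace])
  moreover have "u0 \<noteq> 0" using f(2) oproj_in_span[of A w B f] by (auto simp: u0_def)
  moreover have "\<forall>b\<in>B. wdot A w u0 b = 0"
    unfolding u0_def using wdot_minus_oproj[OF fin wpos B(1,2) orth] by blast
  ultimately obtain u \<mu> where u: "u \<in> Lfun A" "u \<noteq> 0" "\<forall>b\<in>B. wdot A w u b = 0"
    "apply_kernel A p u = fscale \<mu> u"
    using eigenvector_orthogonal_exists[OF fin wpos db eig] by metis
  moreover have "u \<notin> B" using u(1-3) wdot_self_eq_0[OF fin wpos] by blast
  ultimately show ?thesis using that by blast
qed

lemma orth_eigenbasis_exists:
  assumes fin: "finite A" and wpos: "\<forall>x\<in>A. w x > 0" and db: "detailed_balance A w p"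
  obtains B ev where "orth_eigenbasis A w p B ev"
proof -
  have "\<exists>B ev. B \<subseteq> Lfun A \<and> finite B \<and> card B = k \<and> 0 \<notin> B \<and>
      pairwise (\<lambda>a b. wdot A w a b = 0) B \<and> (\<forall>b\<in>B. apply_kernel A p b = fscale (ev b) b)"
    if "k \<le> card A" for k
    using that
  proof (induction k)
    case (Suc k)
    then have "k \<le> card A" by simp
    with Suc.IH obtain B ev where B: "B \<subseteq> Lfun A" "finite B" "card B = k" "0 \<notin> B"
      and orth: "pairwise (\<lambda>a b. wdot A w a b = 0) B"
      and eig: "\<forall>b\<in>B. apply_kernel A p b = fscale (ev b) b" by blast
    obtain u \<mu> where u: "u \<in> Lfun A" "u \<noteq> 0" "u \<notin> B" "\<forall>b\<in>B. wdot A w u b = 0"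
      "apply_kernel A p u = fscale \<mu> u"
      using orth_eigenfamily_extend[OF fin wpos db B(1,2,4) _ orth eig] B(3) Suc.prems by auto
    have "pairwise (\<lambda>a b. wdot A w a b = 0) (insert u B)"
      using orth u(4) by (auto simp: pairwise_insert wdot_commute[of A w _ u])
    moreover have "\<forall>b\<in>insert u B. apply_kernel A p b = fscale ((ev(u := \<mu>)) b) b"
      using eig u(3,5) by auto
    moreover have "0 \<notin> insert u B" using B(4) u(2) by auto
    moreover have "insert u B \<subseteq> Lfun A" "finite (insert u B)" "card (insert u B) = Suc k"
      using B u by auto
    ultimately show ?case by blast
  qed auto
  from this[of "card A"] show ?thesis using that unfolding orth_eigenbasis_def by blast
qed

context
  fixes A :: "'b set" and w p B ev
  assumes fin: "finite A" and wpos: "\<forall>x\<in>A. w x > 0" and db: "detailed_balance A w p"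
    and eb: "orth_eigenbasis A w p B ev"
begin

lemma orth_eigenbasis_props:
  "B \<subseteq> Lfun A" "finite B" "card B = card A" "0 \<notin> B" "pairwise (\<lambda>a b. wdot A w a b = 0) B"
  "\<And>b. b \<in> B \<Longrightarrow> apply_kernel A p b = fscale (ev b) b"
  using eb unfolding orth_eigenbasis_def by auto

lemma orth_eigenbasis_eigspace: "b \<in> B \<Longrightarrow> b \<in> eigspace A p (ev b)"
  using orth_eigenbasis_props by (auto simp: eigspace_def)

lemma orth_eigenbasis_independent: "fs.independent B"
  using pairwise_orthogonal_independent[OF fin wpos orth_eigenbasis_props(1,4,5)] .

lemma Lfun_subset_span_orth_eigenbasis: "Lfun A \<subseteq> fs.span B"
  using Lfun_subset_span_independent[OF fin orth_eigenbasis_props(1) orth_eigenbasis_independent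
      orth_eigenbasis_props(3)] .

lemma orth_eigenbasis_expansion: "f \<in> Lfun A \<Longrightarrow> oproj A w B f = f"
  using oproj_eq_self[OF fin wpos orth_eigenbasis_props(1,2,5)] Lfun_subset_span_orth_eigenbasis
  by blast

text \<open>Basis vectors with eigenvalue other than \<open>lam\<close> are orthogonal to \<open>f\<close>.\<close>
lemma orth_eigenbasis_expansion_eigspace:
  assumes "f \<in> eigspace A p lam"
  shows "f = oproj A w {b\<in>B. ev b = lam} f"
proof -
  have "oproj A w B f = oproj A w {b\<in>B. ev b = lam} f"
    unfolding oproj_def
  proof (rule sum.mono_neutral_right)
    show "\<forall>b\<in>B - {b \<in> B. ev b = lam}. fscale (wdot A w f b / wdot A w b b) b = 0"
    proof
      fix b assume b: "b \<in> B - {b \<in> B. ev b = lam}"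
      have "apply_kernel A p f = fscale lam f" using assms by (simp add: eigspace_def)
      from eigenvectors_orthogonal[OF db this orth_eigenbasis_props(6)] b
      have "wdot A w f b = 0" by auto
      then show "fscale (wdot A w f b / wdot A w b b) b = 0" by (simp add: fun_eq_iff)
    qed
  qed (use orth_eigenbasis_props in auto)
  then show ?thesis
    using orth_eigenbasis_expansion assms by (simp add: eigspace_def)
qed

lemma eigspace_eq_span_orth_eigenbasis: "eigspace A p lam = fs.span {b\<in>B. ev b = lam}"
proof
  show "eigspace A p lam \<subseteq> fs.span {b\<in>B. ev b = lam}"
  proof
    fix f assume "f \<in> eigspace A p lam"
    then have "f = oproj A w {b\<in>B. ev b = lam} f" by (rule orth_eigenbasis_expansion_eigspace)
    also have "\<dots> \<in> fs.span {b\<in>B. ev b = lam}" by (rule oproj_in_span)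
    finally show "f \<in> fs.span {b\<in>B. ev b = lam}" .
  qed
  show "fs.span {b\<in>B. ev b = lam} \<subseteq> eigspace A p lam"
    by (rule fs.span_minimal[OF _ eigspace_subspace]) (use orth_eigenbasis_eigspace in blast)
qed

lemma dim_eigspace_orth_eigenbasis: "fs.dim (eigspace A p lam) = card {b\<in>B. ev b = lam}"
  unfolding eigspace_eq_span_orth_eigenbasis fs.dim_span
  by (intro fs.dim_eq_card_independent fs.independent_mono[OF orth_eigenbasis_independent]) auto

lemma eigvals_orth_eigenbasis: "eigvals A p = ev ` B"
proof
  show "eigvals A p \<subseteq> ev ` B"
  proof
    fix lam assume "lam \<in> eigvals A p"
    then obtain f where "f \<in> eigspace A p lam" "f \<noteq> 0"
      by (auto simp: eigvals_def eigspace_def zero_fun_def)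
    then have "f \<in> fs.span {b\<in>B. ev b = lam}" "f \<noteq> 0"
      using eigspace_eq_span_orth_eigenbasis by auto
    then have "{b\<in>B. ev b = lam} \<noteq> {}" by (metis fs.span_empty singletonD)
    then show "lam \<in> ev ` B" by blast
  qed
  show "ev ` B \<subseteq> eigvals A p"
  proof
    fix lam assume "lam \<in> ev ` B"
    then obtain b where b: "b \<in> B" "lam = ev b" by blast
    have "b \<noteq> 0" using b(1) orth_eigenbasis_props(4) by blast
    then have "b \<noteq> (\<lambda>_. 0)" by (simp add: zero_fun_def)
    then show "lam \<in> eigvals A p"
      unfolding eigvals_def using b orth_eigenbasis_props(1,6) by blast
  qed
qed

end

section \<open>Irreducible stochastic kernels\<close>

lemma harmonic_max_reachable:
  assumes st: "stochastic A p" and harm: "apply_kernel A p f = f" and max: "\<forall>z\<in>A. f z \<le> M"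
  shows "z \<in> A \<Longrightarrow> f z = M \<Longrightarrow> y \<in> A \<Longrightarrow> kpow A p k z y > 0 \<Longrightarrow> f y = M"
proof (induction k arbitrary: z)
  case 0
  then show ?case by (simp split: if_splits)
next
  case (Suc k)
  have pnn: "\<forall>v\<in>A. p z v \<ge> 0" and psum: "(\<Sum>v\<in>A. p z v) = 1"
    using st Suc.prems(1) unfolding stochastic_def by auto
  then have fin: "finite A" by (metis sum.infinite zero_neq_one)
  have "\<not> (\<forall>u\<in>A. p z u * kpow A p k u y \<le> 0)"
    using Suc.prems(4) sum_nonpos[of A "\<lambda>u. p z u * kpow A p k u y"] by auto
  then obtain u where u: "u \<in> A" "p z u * kpow A p k u y > 0" by (auto simp: not_le)
  then have pzu: "p z u > 0" and kpow: "kpow A p k u y > 0"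
    using pnn by (auto simp: zero_less_mult_iff)
  have "(\<Sum>v\<in>A. p z v * (M - f v)) = M * (\<Sum>v\<in>A. p z v) - (\<Sum>v\<in>A. p z v * f v)"
    by (simp add: right_diff_distrib sum_subtractf sum_distrib_left mult.commute)
  also have "(\<Sum>v\<in>A. p z v * f v) = M"
    using apply_kernel_apply[OF Suc.prems(1), of p f] harm Suc.prems(2) by simp
  finally have "(\<Sum>v\<in>A. p z v * (M - f v)) = 0" using psum by simp
  moreover have "\<forall>v\<in>A. 0 \<le> p z v * (M - f v)" using pnn max by simp
  ultimately have "\<forall>v\<in>A. p z v * (M - f v) = 0" by (simp add: sum_nonneg_eq_0_iff[OF fin])
  then have "p z u * (M - f u) = 0" using u(1) by blast
  then have "f u = M" using pzu by simp
  then show ?case by (rule Suc.IH[OF u(1) _ Suc.prems(3) kpow])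
qed

lemma harmonic_constant:
  assumes fin: "finite A" and st: "stochastic A p" and irr: "irreducible_kernel A p"
    and f: "f \<in> eigspace A p 1" and x: "x \<in> A" and y: "y \<in> A"
  shows "f x = f y"
proof -
  have harm: "apply_kernel A p f = f" using f by (simp add: eigspace_def fs.scale_one del: fscale_apply)
  define M where "M = Max (f ` A)"
  have "M \<in> f ` A" unfolding M_def using fin x by (intro Max_in) auto
  then obtain z where z: "z \<in> A" "f z = M" by auto
  have max: "\<forall>v\<in>A. f v \<le> M" unfolding M_def using fin by (auto intro: Max_ge)
  have "f v = M" if v: "v \<in> A" for v
  proof -
    obtain k where "kpow A p k z v > 0"
      using irr[unfolded irreducible_kernel_def, rule_format, OF z(1) v] ..
    then show ?thesis using harmonic_max_reachable[OF st harm max z v] by simp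
  qed
  then show ?thesis using x y by simp
qed

lemma dim_eigspace_one:
  assumes fin: "finite A" and st: "stochastic A p" and irr: "irreducible_kernel A p" and "A \<noteq> {}"
  shows "fs.dim (eigspace A p 1) = 1"
proof -
  obtain a where a: "a \<in> A" using assms(4) by auto
  have "eigspace A p 1 = fs.span {indicator A}"
  proof
    show "eigspace A p 1 \<subseteq> fs.span {indicator A}"
    proof
      fix f assume f: "f \<in> eigspace A p 1"
      then have "f = fscale (f a) (indicator A)"
        using harmonic_constant[OF fin st irr f _ a]
        by (auto simp: fun_eq_iff indicator_def eigspace_def Lfun_def)
      then show "f \<in> fs.span {indicator A}" by (metis fs.span_base fs.span_scale singletonI)
    qed
    have "indicator A \<in> eigspace A p 1"
      using st by (auto simp: eigspace_def indicator_def Lfun_def apply_kernel_def stochastic_def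
          fun_eq_iff if_distrib[of "\<lambda>t. _ * t"] sum.If_cases)
    then show "fs.span {indicator A} \<subseteq> eigspace A p 1"
      by (intro fs.span_minimal eigspace_subspace) auto
  qed
  moreover have "(indicator A :: _ \<Rightarrow> real) \<noteq> 0"
    using a by (auto simp: fun_eq_iff indicator_def)
  ultimately show ?thesis by (simp add: fs.dim_eq_card_independent)
qed

lemma sum_eigenvector_eq_0:
  assumes st: "stochastic A p" and sym: "\<forall>x\<in>A. \<forall>y\<in>A. p x y = p y x"
    and f: "f \<in> eigspace A p lam" and "lam \<noteq> 1"
  shows "(\<Sum>x\<in>A. f x) = 0"
proof -
  have "lam * (\<Sum>x\<in>A. f x) = (\<Sum>x\<in>A. apply_kernel A p f x)"
    using f by (simp add: eigspace_def sum_distrib_left)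
  also have "\<dots> = (\<Sum>x\<in>A. \<Sum>y\<in>A. p x y * f y)" by (simp add: apply_kernel_apply)
  also have "\<dots> = (\<Sum>y\<in>A. f y * (\<Sum>x\<in>A. p y x))"
    using sym by (subst sum.swap) (simp add: sum_distrib_left mult.commute)
  also have "\<dots> = (\<Sum>x\<in>A. f x)" using st by (simp add: stochastic_def)
  finally show ?thesis using \<open>lam \<noteq> 1\<close> by (simp add: algebra_simps)
qed

section \<open>Elementary tensors and the nested product\<close>

definition tens :: "nat \<Rightarrow> (nat \<Rightarrow> 'a set) \<Rightarrow> (nat \<Rightarrow> 'a \<Rightarrow> real) \<Rightarrow> (nat \<Rightarrow> 'a) \<Rightarrow> real" where
  "tens n X f = (\<lambda>x. if x \<in> prodX n X then (\<Prod>i\<in>{1..n}. f i (x i)) else 0)"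

lemma tensor_sub_eq_span_tens: "tensor_sub n X V = fs.span {tens n X f | f. \<forall>i\<in>{1..n}. f i \<in> V i}"
  unfolding tensor_sub_def tens_def ..

lemma tens_in_Lfun: "tens n X f \<in> Lfun (prodX n X)"
  by (simp add: tens_def Lfun_def)

lemma prod_split_at:
  fixes h :: "nat \<Rightarrow> 'c::comm_monoid_mult"
  assumes "k \<in> {1..n}"
  shows "(\<Prod>j\<in>{1..n}. h j) = (\<Prod>j\<in>{1..<k}. h j) * h k * (\<Prod>j\<in>{k<..n}. h j)"
proof -
  have "{1..n} = insert k ({1..<k} \<union> {k<..n})" using assms by auto
  then have "(\<Prod>j\<in>{1..n}. h j) = h k * (\<Prod>j\<in>{1..<k} \<union> {k<..n}. h j)" by simp
  also have "\<dots> = h k * ((\<Prod>j\<in>{1..<k}. h j) * (\<Prod>j\<in>{k<..n}. h j))"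
    by (subst prod.union_disjoint) auto
  finally show ?thesis by (simp add: ac_simps)
qed

lemma sum_split_at:
  fixes h :: "nat \<Rightarrow> 'c::comm_monoid_add"
  assumes "k \<in> {1..n}"
  shows "(\<Sum>j\<in>{1..n}. h j) = (\<Sum>j\<in>{1..<k}. h j) + h k + (\<Sum>j\<in>{k<..n}. h j)"
proof -
  have "{1..n} = insert k ({1..<k} \<union> {k<..n})" using assms by auto
  then have "(\<Sum>j\<in>{1..n}. h j) = h k + (\<Sum>j\<in>{1..<k} \<union> {k<..n}. h j)" by simp
  also have "\<dots> = h k + ((\<Sum>j\<in>{1..<k}. h j) + (\<Sum>j\<in>{k<..n}. h j))"
    by (subst sum.union_disjoint) auto
  finally show ?thesis by (simp add: ac_simps)
qed

lemma apply_kernel_prod_tens: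
  assumes fin: "\<forall>j\<in>{1..n}. finite (X j)"
  shows "apply_kernel (prodX n X) (\<lambda>x y. \<Prod>j\<in>{1..n}. q j (x j) (y j)) (tens n X f)
       = tens n X (\<lambda>j. apply_kernel (X j) (q j) (f j))"
proof
  fix x
  show "apply_kernel (prodX n X) (\<lambda>x y. \<Prod>j\<in>{1..n}. q j (x j) (y j)) (tens n X f) x
       = tens n X (\<lambda>j. apply_kernel (X j) (q j) (f j)) x"
  proof (cases "x \<in> prodX n X")
    case True
    have "apply_kernel (prodX n X) (\<lambda>x y. \<Prod>j\<in>{1..n}. q j (x j) (y j)) (tens n X f) x
        = (\<Sum>y\<in>prodX n X. \<Prod>j\<in>{1..n}. q j (x j) (y j) * f j (y j))"
      using True by (simp add: apply_kernel_def tens_def prod.distrib)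
    also have "\<dots> = (\<Prod>j\<in>{1..n}. \<Sum>z\<in>X j. q j (x j) z * f j z)"
      using fin by (intro prod_sum_PiE[symmetric]) auto
    also have "\<dots> = tens n X (\<lambda>j. apply_kernel (X j) (q j) (f j)) x"
      using True by (auto simp: tens_def apply_kernel_apply PiE_iff intro!: prod.cong)
    finally show ?thesis .
  qed (simp add: apply_kernel_def tens_def)
qed

lemma apply_kernel_sum_kernels:
  "apply_kernel A (\<lambda>x y. \<Sum>k\<in>K. c k * q k x y) f = (\<Sum>k\<in>K. fscale (c k) (apply_kernel A (q k) f))"
  by (auto simp: fun_eq_iff apply_kernel_def sum_fun_apply sum_distrib_left sum_distrib_right
      mult.assoc intro: sum.swap)

text \<open>The \<open>j\<close>-th tensor factor of the \<open>k\<close>-th summand of the nested product: \<open>I\<close> for \<open>j < k\<close>,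
  \<open>P\<^sub>k\<close> for \<open>j = k\<close>, and \<open>J\<close> for \<open>j > k\<close>.\<close>
definition nested_factor :: "(nat \<Rightarrow> 'a set) \<Rightarrow> (nat \<Rightarrow> 'a \<Rightarrow> 'a \<Rightarrow> real) \<Rightarrow> nat \<Rightarrow> nat \<Rightarrow> 'a \<Rightarrow> 'a \<Rightarrow> real" where
  "nested_factor X p k j a b =
     (if j < k then (if a = b then 1 else 0) else if j = k then p k a b else 1 / real (card (X j)))"

lemma nested_kernel_eq_sum_prod:
  "nested_kernel n X p0 p =
     (\<lambda>x y. \<Sum>k\<in>{1..n}. p0 k * (\<Prod>j\<in>{1..n}. nested_factor X p k j (x j) (y j)))"
  unfolding nested_kernel_def
proof (intro ext sum.cong refl)
  fix x y k assume k: "k \<in> {1..n}"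
  have "(\<Prod>j\<in>{1..<k}. nested_factor X p k j (x j) (y j)) = (\<Prod>j\<in>{1..<k}. if x j = y j then 1 else 0)"
    by (intro prod.cong) (auto simp: nested_factor_def)
  moreover have "(\<Prod>j\<in>{k<..n}. nested_factor X p k j (x j) (y j)) = (\<Prod>j\<in>{k<..n}. 1 / real (card (X j)))"
    by (intro prod.cong) (auto simp: nested_factor_def)
  moreover have "\<dots> = 1 / (\<Prod>j\<in>{k<..n}. real (card (X j)))" by (simp add: prod_dividef)
  ultimately show "p0 k * (\<Prod>j\<in>{1..<k}. if x j = y j then 1 else 0) * p k (x k) (y k)
      / (\<Prod>j\<in>{k<..n}. real (card (X j)))
    = p0 k * (\<Prod>j\<in>{1..n}. nested_factor X p k j (x j) (y j))"
    unfolding prod_split_at[OF k] by (simp add: nested_factor_def)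
qed

lemma apply_kernel_nested_factor:
  assumes "finite (X j)" "a \<in> X j"
  shows "apply_kernel (X j) (nested_factor X p k j) g a =
    (if j < k then g a else if j = k then apply_kernel (X k) (p k) g a
     else (\<Sum>z\<in>X j. g z) / real (card (X j)))"
  using assms by (auto simp: apply_kernel_apply nested_factor_def sum_divide_distrib
      if_distrib[of "\<lambda>t. t * _"] cong: if_cong)

lemma apply_kernel_nested_kernel_tens:
  assumes fin: "\<forall>j\<in>{1..n}. finite (X j)" and x: "x \<in> prodX n X"
  shows "apply_kernel (prodX n X) (nested_kernel n X p0 p) (tens n X f) x =
    (\<Sum>k\<in>{1..n}. p0 k * (\<Prod>j\<in>{1..<k}. f j (x j)) * apply_kernel (X k) (p k) (f k) (x k) *
        (\<Prod>j\<in>{k<..n}. (\<Sum>z\<in>X j. f j z) / real (card (X j))))"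
proof -
  have "apply_kernel (prodX n X) (nested_kernel n X p0 p) (tens n X f) x =
      (\<Sum>k\<in>{1..n}. p0 k * (\<Prod>j\<in>{1..n}. apply_kernel (X j) (nested_factor X p k j) (f j) (x j)))"
    using x unfolding nested_kernel_eq_sum_prod apply_kernel_sum_kernels apply_kernel_prod_tens[OF fin]
    by (simp add: sum_fun_apply tens_def)
  also have "\<dots> = (\<Sum>k\<in>{1..n}. p0 k * (\<Prod>j\<in>{1..<k}. f j (x j)) * apply_kernel (X k) (p k) (f k) (x k) *
        (\<Prod>j\<in>{k<..n}. (\<Sum>z\<in>X j. f j z) / real (card (X j))))"
  proof (intro sum.cong refl)
    fix k assume k: "k \<in> {1..n}"
    have fac: "apply_kernel (X j) (nested_factor X p k j) (f j) (x j) =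
        (if j < k then f j (x j) else if j = k then apply_kernel (X k) (p k) (f j) (x j)
         else (\<Sum>z\<in>X j. f j z) / real (card (X j)))" if "j \<in> {1..n}" for j
      using fin x that by (intro apply_kernel_nested_factor) (auto simp: PiE_iff)
    have "(\<Prod>j\<in>{1..<k}. apply_kernel (X j) (nested_factor X p k j) (f j) (x j)) = (\<Prod>j\<in>{1..<k}. f j (x j))"
      using k by (intro prod.cong) (auto simp: fac)
    moreover have "(\<Prod>j\<in>{k<..n}. apply_kernel (X j) (nested_factor X p k j) (f j) (x j)) =
        (\<Prod>j\<in>{k<..n}. (\<Sum>z\<in>X j. f j z) / real (card (X j)))"
      using k by (intro prod.cong) (auto simp: fac)
    moreover have "apply_kernel (X k) (nested_factor X p k k) (f k) (x k) = apply_kernel (X k) (p k) (f k) (x k)"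
      using fac[OF k] by simp
    ultimately show "p0 k * (\<Prod>j\<in>{1..n}. apply_kernel (X j) (nested_factor X p k j) (f j) (x j)) =
        p0 k * (\<Prod>j\<in>{1..<k}. f j (x j)) * apply_kernel (X k) (p k) (f k) (x k) *
        (\<Prod>j\<in>{k<..n}. (\<Sum>z\<in>X j. f j z) / real (card (X j)))"
      unfolding prod_split_at[OF k] by (simp add: mult.assoc)
  qed
  finally show ?thesis .
qed

definition prod_weight :: "nat \<Rightarrow> (nat \<Rightarrow> 'a \<Rightarrow> real) \<Rightarrow> (nat \<Rightarrow> 'a) \<Rightarrow> real" where
  "prod_weight n w x = (\<Prod>i\<in>{1..n}. w i (x i))"

lemma wdot_tens:
  assumes fin: "\<forall>i\<in>{1..n}. finite (X i)"
  shows "wdot (prodX n X) (prod_weight n w) (tens n X f) (tens n X g) =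
    (\<Prod>i\<in>{1..n}. wdot (X i) (w i) (f i) (g i))"
proof -
  have "wdot (prodX n X) (prod_weight n w) (tens n X f) (tens n X g)
      = (\<Sum>x\<in>prodX n X. \<Prod>i\<in>{1..n}. w i (x i) * f i (x i) * g i (x i))"
    unfolding wdot_def by (intro sum.cong refl) (simp add: tens_def prod_weight_def prod.distrib)
  also have "\<dots> = (\<Prod>i\<in>{1..n}. wdot (X i) (w i) (f i) (g i))"
    unfolding wdot_def using fin by (intro prod_sum_PiE[symmetric]) auto
  finally show ?thesis .
qed

lemma tens_expand:
  assumes "\<forall>j\<in>{1..n}. finite (S j)" and "\<forall>j\<in>{1..n}. f j = (\<Sum>c\<in>S j. fscale (\<alpha> j c) c)"
  shows "tens n X f = (\<Sum>b\<in>PiE {1..n} S. fscale (\<Prod>j\<in>{1..n}. \<alpha> j (b j)) (tens n X b))"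
proof
  fix x
  show "tens n X f x = (\<Sum>b\<in>PiE {1..n} S. fscale (\<Prod>j\<in>{1..n}. \<alpha> j (b j)) (tens n X b)) x"
  proof (cases "x \<in> prodX n X")
    case True
    have "tens n X f x = (\<Prod>j\<in>{1..n}. \<Sum>c\<in>S j. \<alpha> j c * c (x j))"
      using True assms(2) by (simp add: tens_def sum_fun_apply)
    also have "\<dots> = (\<Sum>b\<in>PiE {1..n} S. \<Prod>j\<in>{1..n}. \<alpha> j (b j) * b j (x j))"
      using assms(1) by (intro prod_sum_PiE) auto
    finally show ?thesis
      using True by (simp add: sum_fun_apply tens_def prod.distrib)
  qed (simp add: tens_def sum_fun_apply)
qed

section \<open>Block decomposition\<close>

lemma span_UN_decompose:
  assumes "finite I" "f \<in> fs.span (\<Union>k\<in>I. T k)"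
  shows "\<exists>g. (\<forall>k\<in>I. g k \<in> fs.span (T k)) \<and> f = (\<Sum>k\<in>I. g k)"
  using assms
proof (induction I arbitrary: f rule: finite_induct)
  case empty
  then have "f = 0" by (simp del: fscale_apply)
  then show ?case by simp
next
  case (insert k I)
  then have "f \<in> fs.span (T k \<union> (\<Union>k\<in>I. T k))" by (simp del: fscale_apply)
  then obtain a b where ab: "a \<in> fs.span (T k)" "b \<in> fs.span (\<Union>k\<in>I. T k)" "f = a + b"
    unfolding fs.span_Un by blast
  with insert.IH obtain g where g: "\<forall>k\<in>I. g k \<in> fs.span (T k)" "b = (\<Sum>k\<in>I. g k)" by blast
  have "(\<Sum>k'\<in>I. (g(k := a)) k') = (\<Sum>k\<in>I. g k)"
    using insert.hyps(2) by (intro sum.cong) auto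
  then show ?case
    using ab g insert.hyps by (intro exI[of _ "g(k := a)"]) (auto simp del: fscale_apply)
qed

lemma is_direct_sum_orthogonal:
  assumes fin: "finite A" and wpos: "\<forall>x\<in>A. w x > 0" and I: "finite I"
    and V: "\<forall>k\<in>I. fs.subspace (V k) \<and> V k \<subseteq> Lfun A"
    and orth: "\<forall>k\<in>I. \<forall>k'\<in>I. k \<noteq> k' \<longrightarrow> (\<forall>u\<in>V k. \<forall>v\<in>V k'. wdot A w u v = 0)"
    and cover: "\<forall>f\<in>Lfun A. \<exists>g. (\<forall>k\<in>I. g k \<in> V k) \<and> f = (\<Sum>k\<in>I. g k)"
  shows "is_direct_sum (Lfun A) I V"
  unfolding is_direct_sum_def
proof (intro conjI ballI ex_ex1I)
  fix f assume "f \<in> Lfun A"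
  with cover obtain g where g: "\<forall>k\<in>I. g k \<in> V k" "f = (\<Sum>k\<in>I. g k)" by blast
  show "\<exists>g. (\<forall>k\<in>I. g k \<in> V k) \<and> (\<forall>k. k \<notin> I \<longrightarrow> g k = (\<lambda>_. 0)) \<and> f = (\<lambda>x. \<Sum>k\<in>I. g k x)"
    using g by (intro exI[of _ "\<lambda>k. if k \<in> I then g k else 0"])
      (auto simp: fun_eq_iff sum_fun_apply intro: sum.cong)
next
  fix f g1 g2
  assume g1: "(\<forall>k\<in>I. g1 k \<in> V k) \<and> (\<forall>k. k \<notin> I \<longrightarrow> g1 k = (\<lambda>_. 0)) \<and> f = (\<lambda>x. \<Sum>k\<in>I. g1 k x)"
    and g2: "(\<forall>k\<in>I. g2 k \<in> V k) \<and> (\<forall>k. k \<notin> I \<longrightarrow> g2 k = (\<lambda>_. 0)) \<and> f = (\<lambda>x. \<Sum>k\<in>I. g2 k x)"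
  define h where "h k = g1 k - g2 k" for k
  have h: "h k \<in> V k" if "k \<in> I" for k
    unfolding h_def using g1 g2 V that by (auto intro: fs.subspace_diff)
  have "(\<Sum>k\<in>I. h k) = 0"
    using g1 g2 by (auto simp: h_def fun_eq_iff sum_fun_apply sum_subtractf)
  have "h k0 = 0" if k0: "k0 \<in> I" for k0
  proof -
    have "\<forall>k\<in>I - {k0}. wdot A w (h k) (h k0) = 0" using orth h k0 by blast
    then have "wdot A w (h k0) (h k0) = (\<Sum>k\<in>I. wdot A w (h k) (h k0))"
      by (subst sum.remove[OF I k0]) simp
    also have "\<dots> = wdot A w (\<Sum>k\<in>I. h k) (h k0)" by (simp add: wdot_sum_left)
    finally have "wdot A w (h k0) (h k0) = 0" using \<open>(\<Sum>k\<in>I. h k) = 0\<close> by simp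
    then show ?thesis using wdot_self_eq_0[OF fin wpos] h[OF k0] V k0 by blast
  qed
  show "g1 = g2"
  proof
    fix k show "g1 k = g2 k"
      using g1 g2 \<open>\<And>k0. k0 \<in> I \<Longrightarrow> h k0 = 0\<close> by (cases "k \<in> I") (auto simp: h_def)
  qed
qed (use V I in auto)

locale nested_product =
  fixes n :: nat and X :: "nat \<Rightarrow> 'a set" and p :: "nat \<Rightarrow> 'a \<Rightarrow> 'a \<Rightarrow> real"
    and \<pi> :: "nat \<Rightarrow> 'a \<Rightarrow> real" and p0 :: "nat \<Rightarrow> real"
    and B :: "nat \<Rightarrow> ('a \<Rightarrow> real) set" and ev :: "nat \<Rightarrow> ('a \<Rightarrow> real) \<Rightarrow> real"
  assumes n1: "n \<ge> 1"
    and fin: "\<forall>i\<in>{1..n}. finite (X i)"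
    and stoch: "\<forall>i\<in>{1..n}. stochastic (X i) (p i)"
    and irr: "\<forall>i\<in>{1..n}. irreducible_kernel (X i) (p i)"
    and pos: "\<forall>i\<in>{1..n}. positive_prob (X i) (\<pi> i)"
    and db: "\<forall>i\<in>{1..n}. detailed_balance (X i) (\<pi> i) (p i)"
    and sym: "\<forall>i\<in>{2..n}. \<forall>x\<in>X i. \<forall>y\<in>X i. p i x y = p i y x"
    and eb: "\<forall>i\<in>{1..n}. orth_eigenbasis (X i) (\<pi> i) (p i) (B i) (ev i)"
begin

lemma
  assumes "i \<in> {1..n}"
  shows finite_X: "finite (X i)" and pos_\<pi>: "\<forall>x\<in>X i. \<pi> i x > 0" and X_ne: "X i \<noteq> {}"
    and basis: "B i \<subseteq> Lfun (X i)" "finite (B i)" "card (B i) = card (X i)" "0 \<notin> B i"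
      "pairwise (\<lambda>a b. wdot (X i) (\<pi> i) a b = 0) (B i)"
    and basis_eigspace: "b \<in> B i \<Longrightarrow> b \<in> eigspace (X i) (p i) (ev i b)"
    and dim_eigspace: "fs.dim (eigspace (X i) (p i) lam) = card {b\<in>B i. ev i b = lam}"
    and eigvals_eq: "eigvals (X i) (p i) = ev i ` B i"
proof -
  show fX: "finite (X i)" and w: "\<forall>x\<in>X i. \<pi> i x > 0"
    using assms fin pos by (auto simp: positive_prob_def)
  show "X i \<noteq> {}" using pos[rule_format, OF assms] by (auto simp: positive_prob_def)
  note facts = fX w db[rule_format, OF assms] eb[rule_format, OF assms]
  show "B i \<subseteq> Lfun (X i)" "finite (B i)" "card (B i) = card (X i)" "0 \<notin> B i"
    "pairwise (\<lambda>a b. wdot (X i) (\<pi> i) a b = 0) (B i)"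
    using orth_eigenbasis_props[OF facts] by blast+
  show "b \<in> B i \<Longrightarrow> b \<in> eigspace (X i) (p i) (ev i b)"
    by (rule orth_eigenbasis_eigspace[OF facts])
  show "fs.dim (eigspace (X i) (p i) lam) = card {b\<in>B i. ev i b = lam}"
    by (rule dim_eigspace_orth_eigenbasis[OF facts])
  show "eigvals (X i) (p i) = ev i ` B i"
    by (rule eigvals_orth_eigenbasis[OF facts])
qed

lemma finite_prodX: "finite (prodX n X)"
  using fin by (intro finite_PiE) auto

lemma pos_prod_weight: "\<forall>x\<in>prodX n X. prod_weight n \<pi> x > 0"
  unfolding prod_weight_def using pos_\<pi> by (auto intro!: prod_pos simp: PiE_iff)

lemma wdot_tens_basis_orthogonal:
  assumes "b \<in> PiE {1..n} B" "b' \<in> PiE {1..n} B" "b \<noteq> b'"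
  shows "wdot (prodX n X) (prod_weight n \<pi>) (tens n X b) (tens n X b') = 0"
proof -
  obtain i where i: "i \<in> {1..n}" "b i \<noteq> b' i" using assms by (metis PiE_ext)
  moreover have "b i \<in> B i" "b' i \<in> B i" using assms(1,2) i(1) by (auto simp: PiE_iff)
  ultimately have "wdot (X i) (\<pi> i) (b i) (b' i) = 0"
    using basis(5)[OF i(1)] unfolding pairwise_def by blast
  then show ?thesis unfolding wdot_tens[OF fin] using i(1) by (intro prod_zero) auto
qed

lemma wdot_tens_basis_pos:
  assumes "b \<in> PiE {1..n} B"
  shows "wdot (prodX n X) (prod_weight n \<pi>) (tens n X b) (tens n X b) > 0"
  unfolding wdot_tens[OF fin]
proof (rule prod_pos)
  fix i assume i: "i \<in> {1..n}"
  then have "b i \<in> B i" using assms by (auto simp: PiE_iff)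
  show "wdot (X i) (\<pi> i) (b i) (b i) > 0"
  proof (rule wdot_self_pos[OF finite_X[OF i] pos_\<pi>[OF i]])
    show "b i \<in> Lfun (X i)" using basis(1)[OF i] \<open>b i \<in> B i\<close> by blast
    show "b i \<noteq> 0" using basis(4)[OF i] \<open>b i \<in> B i\<close> by metis
  qed
qed

lemma inj_on_tens_basis: "inj_on (tens n X) (PiE {1..n} B)"
proof (rule inj_onI, rule ccontr)
  fix b b' assume b: "b \<in> PiE {1..n} B" "b' \<in> PiE {1..n} B" "tens n X b = tens n X b'" "b \<noteq> b'"
  then show False
    using wdot_tens_basis_orthogonal[OF b(1,2,4)] wdot_tens_basis_pos[OF b(1)] by simp
qed

lemma independent_tens_basis: "fs.independent (tens n X ` PiE {1..n} B)"
proof (rule pairwise_orthogonal_independent[OF finite_prodX pos_prod_weight])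
  show "tens n X ` PiE {1..n} B \<subseteq> Lfun (prodX n X)" using tens_in_Lfun by blast
  show "0 \<notin> tens n X ` PiE {1..n} B"
  proof
    assume "0 \<in> tens n X ` PiE {1..n} B"
    then obtain b where "b \<in> PiE {1..n} B" "tens n X b = 0" by auto
    then show False using wdot_tens_basis_pos[of b] by simp
  qed
  show "pairwise (\<lambda>a b. wdot (prodX n X) (prod_weight n \<pi>) a b = 0) (tens n X ` PiE {1..n} B)"
    using wdot_tens_basis_orthogonal by (auto simp: pairwise_def)
qed

lemma Lfun_subset_span_tens_basis: "Lfun (prodX n X) \<subseteq> fs.span (tens n X ` PiE {1..n} B)"
proof (rule Lfun_subset_span_independent[OF finite_prodX _ independent_tens_basis])
  show "tens n X ` PiE {1..n} B \<subseteq> Lfun (prodX n X)" using tens_in_Lfun by blast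
  have "card (tens n X ` PiE {1..n} B) = card (PiE {1..n} B)"
    by (rule card_image[OF inj_on_tens_basis])
  also have "\<dots> = (\<Prod>i\<in>{1..n}. card (B i))" by (simp add: card_PiE)
  also have "\<dots> = card (prodX n X)" using basis(3) by (simp add: card_PiE)
  finally show "card (tens n X ` PiE {1..n} B) = card (prodX n X)" .
qed

definition block_basis :: "nat \<Rightarrow> real \<Rightarrow> nat \<Rightarrow> ('a \<Rightarrow> real) set" where
  "block_basis i lam j =
     (if j < i then B j else if j = i then {b\<in>B i. ev i b = lam} else {b\<in>B j. ev j b = 1})"

lemma block_basis_subset: "block_basis i lam j \<subseteq> B j"
  by (auto simp: block_basis_def)

lemma PiE_block_basis_subset: "PiE {1..n} (block_basis i lam) \<subseteq> PiE {1..n} B"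
  by (rule PiE_mono) (rule block_basis_subset)

lemma block_sub_eq_span:
  assumes i: "i \<in> {1..n}"
  shows "block_sub n X p i lam = fs.span (tens n X ` PiE {1..n} (block_basis i lam))"
proof
  define V where "V j = (if j < i then Lfun (X j) else if j = i then eigspace (X i) (p i) lam
      else eigspace (X j) (p j) 1)" for j
  have V_def': "block_sub n X p i lam = fs.span {tens n X f | f. \<forall>j\<in>{1..n}. f j \<in> V j}"
    unfolding block_sub_def tensor_sub_eq_span_tens V_def ..
  have basis_V: "block_basis i lam j \<subseteq> V j" if j: "j \<in> {1..n}" for j
  proof
    fix b assume b: "b \<in> block_basis i lam j"
    then have "b \<in> B j" using block_basis_subset by blast
    with b basis(1)[OF j] basis_eigspace[OF j \<open>b \<in> B j\<close>] show "b \<in> V j"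
      by (auto simp: V_def block_basis_def split: if_splits)
  qed
  show "fs.span (tens n X ` PiE {1..n} (block_basis i lam)) \<subseteq> block_sub n X p i lam"
    unfolding V_def' using basis_V by (intro fs.span_mono) (force simp: PiE_iff)
  show "block_sub n X p i lam \<subseteq> fs.span (tens n X ` PiE {1..n} (block_basis i lam))"
    unfolding V_def'
  proof (rule fs.span_minimal[OF _ fs.subspace_span], safe)
    fix f assume f: "\<forall>j\<in>{1..n}. f j \<in> V j"
    have "f j = oproj (X j) (\<pi> j) (block_basis i lam j) (f j)" if j: "j \<in> {1..n}" for j
    proof -
      note facts = finite_X[OF j] pos_\<pi>[OF j] db[rule_format, OF j] eb[rule_format, OF j]
      show ?thesis
      proof (cases "j < i")
        case True
        then have "f j \<in> Lfun (X j)" using f[rule_format, OF j] by (simp add: V_def)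
        from orth_eigenbasis_expansion[OF facts this]
        show ?thesis using True by (simp add: block_basis_def)
      next
        case False
        then have "f j \<in> eigspace (X j) (p j) (if j = i then lam else 1)"
          using f[rule_format, OF j] by (auto simp: V_def)
        from orth_eigenbasis_expansion_eigspace[OF facts this]
        show ?thesis using False by (auto simp: block_basis_def)
      qed
    qed
    then have "tens n X f = (\<Sum>b\<in>PiE {1..n} (block_basis i lam).
        fscale (\<Prod>j\<in>{1..n}. wdot (X j) (\<pi> j) (f j) (b j) / wdot (X j) (\<pi> j) (b j) (b j)) (tens n X b))"
      using finite_subset[OF block_basis_subset basis(2)]
      by (intro tens_expand) (auto simp: oproj_def)
    also have "\<dots> \<in> fs.span (tens n X ` PiE {1..n} (block_basis i lam))"
      by (intro fs.span_sum fs.span_scale fs.span_base) auto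
    finally show "tens n X f \<in> fs.span (tens n X ` PiE {1..n} (block_basis i lam))" .
  qed
qed

lemma dim_block_sub:
  assumes i: "i \<in> {1..n}"
  shows "fs.dim (block_sub n X p i lam) = (\<Prod>j\<in>{1..<i}. card (X j)) * fs.dim (eigspace (X i) (p i) lam)"
proof -
  let ?G = "block_basis i lam"
  have "fs.independent (tens n X ` PiE {1..n} ?G)"
    using PiE_block_basis_subset by (intro fs.independent_mono[OF independent_tens_basis]) blast
  then have "fs.dim (block_sub n X p i lam) = card (tens n X ` PiE {1..n} ?G)"
    unfolding block_sub_eq_span[OF i] fs.dim_span by (rule fs.dim_eq_card_independent)
  also have "\<dots> = card (PiE {1..n} ?G)"
    by (rule card_image[OF inj_on_subset[OF inj_on_tens_basis PiE_block_basis_subset]])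
  also have "\<dots> = (\<Prod>j\<in>{1..n}. card (?G j))" by (simp add: card_PiE)
  also have "\<dots> = (\<Prod>j\<in>{1..<i}. card (?G j)) * card (?G i) * (\<Prod>j\<in>{i<..n}. card (?G j))"
    by (rule prod_split_at[OF i])
  also have "(\<Prod>j\<in>{1..<i}. card (?G j)) = (\<Prod>j\<in>{1..<i}. card (X j))"
    using i basis(3) by (intro prod.cong) (auto simp: block_basis_def)
  also have "card (?G i) = fs.dim (eigspace (X i) (p i) lam)"
    using dim_eigspace[OF i] by (simp add: block_basis_def)
  also have "(\<Prod>j\<in>{i<..n}. card (?G j)) = 1"
  proof (intro prod.neutral ballI)
    fix j assume j: "j \<in> {i<..n}"
    then have j': "j \<in> {1..n}" using i by auto
    have "fs.dim (eigspace (X j) (p j) 1) = 1"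
      using stoch irr j' by (intro dim_eigspace_one[OF finite_X[OF j'] _ _ X_ne[OF j']]) auto
    then show "card (?G j) = 1" using j dim_eigspace[OF j'] by (simp add: block_basis_def)
  qed
  finally show ?thesis by (simp del: fscale_apply)
qed

lemma average_eq_if_eigval_one:
  assumes j: "j \<in> {1..n}" and b: "b \<in> B j" "ev j b = 1" and y: "y \<in> X j"
  shows "(\<Sum>z\<in>X j. b z) / real (card (X j)) = b y"
proof -
  have "b \<in> eigspace (X j) (p j) 1" using basis_eigspace[OF j b(1)] b(2) by simp
  then have "(\<Sum>z\<in>X j. b z) = (\<Sum>z\<in>X j. b y)"
    using stoch irr j by (intro sum.cong refl harmonic_constant[OF finite_X[OF j]]) (auto simp: y)
  then show ?thesis using finite_X[OF j] X_ne[OF j] by (simp add: card_gt_0_iff)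
qed

lemma sum_eq_0_if_eigval_ne_one:
  assumes j: "j \<in> {2..n}" and b: "b \<in> B j" "ev j b \<noteq> 1"
  shows "(\<Sum>z\<in>X j. b z) = 0"
proof -
  have j1: "j \<in> {1..n}" using j by auto
  show ?thesis
    using stoch sym j j1 by (intro sum_eigenvector_eq_0[OF _ _ basis_eigspace[OF j1 b(1)] b(2)]) auto
qed

lemma nested_kernel_tens_block_basis:
  assumes i: "i \<in> {1..n}" and c: "i = 1 \<or> lam \<noteq> 1" and b: "b \<in> PiE {1..n} (block_basis i lam)"
  shows "apply_kernel (prodX n X) (nested_kernel n X p0 p) (tens n X b)
     = fscale (p0 i * lam + (\<Sum>k\<in>{i<..n}. p0 k)) (tens n X b)"
proof
  fix x
  show "apply_kernel (prodX n X) (nested_kernel n X p0 p) (tens n X b) x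
     = fscale (p0 i * lam + (\<Sum>k\<in>{i<..n}. p0 k)) (tens n X b) x"
  proof (cases "x \<in> prodX n X")
    case x: True
    have bB: "b j \<in> B j" if "j \<in> {1..n}" for j
      using b that block_basis_subset[of i lam j] by (force simp: PiE_iff)
    have ev: "ev j (b j) = (if j = i then lam else 1)" if j: "j \<in> {i..n}" for j
    proof -
      have "j \<in> {1..n}" using j i by auto
      then have "b j \<in> block_basis i lam j" using b by (auto simp: PiE_iff)
      then show ?thesis using j by (auto simp: block_basis_def)
    qed
    define T where "T = (\<Prod>j\<in>{1..n}. b j (x j))"
    define avg where "avg j = (\<Sum>z\<in>X j. b j z) / real (card (X j))" for j
    have summand: "p0 k * (\<Prod>j\<in>{1..<k}. b j (x j)) * apply_kernel (X k) (p k) (b k) (x k) * (\<Prod>j\<in>{k<..n}. avg j)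
        = (if k < i then 0 else if k = i then p0 i * lam * T else p0 k * T)" if k: "k \<in> {1..n}" for k
    proof (cases "k < i")
      case True
      then have "i \<in> {2..n}" "ev i (b i) \<noteq> 1" using k i c ev[of i] by auto
      then have "avg i = 0" unfolding avg_def using sum_eq_0_if_eigval_ne_one bB[OF i] by simp
      then have "(\<Prod>j\<in>{k<..n}. avg j) = 0" using True i by (intro prod_zero) auto
      then show ?thesis using True by simp
    next
      case False
      have "(\<Prod>j\<in>{k<..n}. avg j) = (\<Prod>j\<in>{k<..n}. b j (x j))"
        using False i x bB ev unfolding avg_def
        by (intro prod.cong refl average_eq_if_eigval_one) (auto simp: PiE_iff)
      moreover have "apply_kernel (X k) (p k) (b k) (x k) = ev k (b k) * b k (x k)"
        using basis_eigspace[OF k bB[OF k]] by (simp add: eigspace_def)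
      ultimately show ?thesis
        using False k ev[of k] unfolding T_def prod_split_at[OF k, of "\<lambda>j. b j (x j)"]
        by (auto simp: mult_ac)
    qed
    have "apply_kernel (prodX n X) (nested_kernel n X p0 p) (tens n X b) x
        = (\<Sum>k\<in>{1..n}. (if k < i then 0 else if k = i then p0 i * lam * T else p0 k * T))"
      unfolding apply_kernel_nested_kernel_tens[OF fin x] avg_def[symmetric] by (rule sum.cong[OF refl summand])
    also have "\<dots> = (p0 i * lam + (\<Sum>k\<in>{i<..n}. p0 k)) * T"
      unfolding sum_split_at[OF i] by (simp add: distrib_right sum_distrib_right)
    finally show ?thesis using x by (simp add: tens_def T_def)
  qed (simp add: apply_kernel_def tens_def)
qed

lemma block_sub_subset_eigspace:
  assumes i: "i \<in> {1..n}" and c: "i = 1 \<or> lam \<noteq> 1"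
  shows "block_sub n X p i lam
    \<subseteq> eigspace (prodX n X) (nested_kernel n X p0 p) (p0 i * lam + (\<Sum>k\<in>{i<..n}. p0 k))"
  unfolding block_sub_eq_span[OF i]
  using nested_kernel_tens_block_basis[OF i c] tens_in_Lfun
  by (intro fs.span_minimal eigspace_subspace) (auto simp: eigspace_def)

definition block_index :: "(nat \<times> real) set" where
  "block_index = {(i, lam). i \<in> {1..n} \<and> lam \<in> eigvals (X i) (p i) \<and> (i = 1 \<or> lam \<noteq> 1)}"

lemma finite_block_index: "finite block_index"
proof (rule finite_subset)
  show "block_index \<subseteq> Sigma {1..n} (\<lambda>i. eigvals (X i) (p i))" by (auto simp: block_index_def)
  show "finite (Sigma {1..n} (\<lambda>i. eigvals (X i) (p i)))"
    using eigvals_eq basis(2) by (intro finite_SigmaI) auto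
qed

text \<open>The block index \<open>i\<close> is the last coordinate whose eigenvalue differs from \<open>1\<close> (or \<open>1\<close> if
  there is none).\<close>
lemma PiE_basis_subset_blocks:
  assumes b: "b \<in> PiE {1..n} B"
  shows "\<exists>(i, lam)\<in>block_index. b \<in> PiE {1..n} (block_basis i lam)"
proof -
  define J where "J = {j\<in>{1..n}. ev j (b j) \<noteq> 1}"
  define i where "i = (if J = {} then 1 else Max J)"
  have finJ: "finite J" by (simp add: J_def)
  have i: "i \<in> {1..n}" using n1 Max_in[OF finJ] by (auto simp: i_def J_def)
  have above: "ev j (b j) = 1" if j: "j \<in> {i<..n}" for j
  proof (rule ccontr)
    assume "ev j (b j) \<noteq> 1"
    then have "j \<in> J" using j by (auto simp: J_def)
    then show False using j Max_ge[OF finJ \<open>j \<in> J\<close>] by (auto simp: i_def split: if_splits)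
  qed
  have "i = 1 \<or> ev i (b i) \<noteq> 1"
    using Max_in[OF finJ] by (auto simp: i_def J_def)
  moreover have "b i \<in> B i" using b i by (auto simp: PiE_iff)
  ultimately have "(i, ev i (b i)) \<in> block_index"
    using i eigvals_eq[OF i] by (auto simp: block_index_def)
  moreover have "b \<in> PiE {1..n} (block_basis i (ev i (b i)))"
    using b above by (auto simp: PiE_iff block_basis_def not_less)
  ultimately show ?thesis by blast
qed

lemma block_basis_disjoint:
  assumes "(i, lam) \<in> block_index" "(i', lam') \<in> block_index"
    and "b \<in> PiE {1..n} (block_basis i lam)" "b \<in> PiE {1..n} (block_basis i' lam')"
  shows "i = i' \<and> lam = lam'"
proof -
  have i: "i \<in> {1..n}" "i = 1 \<or> lam \<noteq> 1" and i': "i' \<in> {1..n}" "i' = 1 \<or> lam' \<noteq> 1"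
    using assms(1,2) by (auto simp: block_index_def)
  have b1: "b j \<in> block_basis i lam j" and b2: "b j \<in> block_basis i' lam' j" if "j \<in> {1..n}" for j
    using assms(3,4) that by (auto simp: PiE_iff)
  have "i = i'"
  proof (rule ccontr)
    assume "i \<noteq> i'"
    then consider "i < i'" | "i' < i" by linarith
    then show False
    proof cases
      case 1
      then show False using b1[OF i'(1)] b2[OF i'(1)] i'(2) i(1) by (auto simp: block_basis_def)
    next
      case 2
      then show False using b1[OF i(1)] b2[OF i(1)] i(2) i'(1) by (auto simp: block_basis_def)
    qed
  qed
  moreover have "lam = lam'" using b1[OF i(1)] b2[OF i(1)] \<open>i = i'\<close> by (auto simp: block_basis_def)
  ultimately show ?thesis ..
qed

lemma blocks_orthogonal:
  assumes k: "(i, lam) \<in> block_index" and k': "(i', lam') \<in> block_index" and ne: "(i, lam) \<noteq> (i', lam')"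
    and u: "u \<in> block_sub n X p i lam" and v: "v \<in> block_sub n X p i' lam'"
  shows "wdot (prodX n X) (prod_weight n \<pi>) u v = 0"
proof -
  have i: "i \<in> {1..n}" "i' \<in> {1..n}" using k k' by (auto simp: block_index_def)
  have basis_orth: "wdot (prodX n X) (prod_weight n \<pi>) (tens n X b) (tens n X b') = 0"
    if "b \<in> PiE {1..n} (block_basis i lam)" "b' \<in> PiE {1..n} (block_basis i' lam')" for b b'
    using that block_basis_disjoint[OF k k'] ne PiE_block_basis_subset
    by (intro wdot_tens_basis_orthogonal) blast+
  have cu: "wdot (prodX n X) (prod_weight n \<pi>) c u = 0"
    if c: "c \<in> tens n X ` PiE {1..n} (block_basis i' lam')" for c
  proof -
    have "wdot (prodX n X) (prod_weight n \<pi>) u c = 0"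
    proof (rule wdot_span_eq_0)
      show "u \<in> fs.span (tens n X ` PiE {1..n} (block_basis i lam))"
        using u unfolding block_sub_eq_span[OF i(1)] .
      show "\<forall>a\<in>tens n X ` PiE {1..n} (block_basis i lam). wdot (prodX n X) (prod_weight n \<pi>) a c = 0"
        using basis_orth c by auto
    qed
    then show ?thesis by (simp add: wdot_commute)
  qed
  have "wdot (prodX n X) (prod_weight n \<pi>) v u = 0"
  proof (rule wdot_span_eq_0)
    show "v \<in> fs.span (tens n X ` PiE {1..n} (block_basis i' lam'))"
      using v unfolding block_sub_eq_span[OF i(2)] .
  qed (use cu in blast)
  then show ?thesis by (simp add: wdot_commute)
qed

lemma Lfun_subset_span_blocks:
  "Lfun (prodX n X) \<subseteq> fs.span (\<Union>(i, lam)\<in>block_index. tens n X ` PiE {1..n} (block_basis i lam))"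
proof -
  have "tens n X ` PiE {1..n} B \<subseteq> (\<Union>(i, lam)\<in>block_index. tens n X ` PiE {1..n} (block_basis i lam))"
  proof
    fix t assume "t \<in> tens n X ` PiE {1..n} B"
    then obtain b where b: "b \<in> PiE {1..n} B" "t = tens n X b" by blast
    from PiE_basis_subset_blocks[OF b(1)] obtain i lam
      where "(i, lam) \<in> block_index" "b \<in> PiE {1..n} (block_basis i lam)" by blast
    then show "t \<in> (\<Union>(i, lam)\<in>block_index. tens n X ` PiE {1..n} (block_basis i lam))"
      using b(2) by (intro UN_I[of "(i, lam)"]) auto
  qed
  then show ?thesis using Lfun_subset_span_tens_basis fs.span_mono by blast
qed

lemma is_direct_sum_blocks:
  "is_direct_sum (Lfun (prodX n X)) block_index (\<lambda>(i, lam). block_sub n X p i lam)"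
proof (rule is_direct_sum_orthogonal[OF finite_prodX pos_prod_weight finite_block_index])
  let ?T = "\<lambda>(i, lam). tens n X ` PiE {1..n} (block_basis i lam)"
  have span: "(\<lambda>(i, lam). block_sub n X p i lam) k = fs.span (?T k)" if "k \<in> block_index" for k
    using that block_sub_eq_span by (auto simp: block_index_def)
  show "\<forall>k\<in>block_index. fs.subspace ((\<lambda>(i, lam). block_sub n X p i lam) k) \<and>
      (\<lambda>(i, lam). block_sub n X p i lam) k \<subseteq> Lfun (prodX n X)"
  proof
    fix k assume k: "k \<in> block_index"
    have "?T k \<subseteq> Lfun (prodX n X)" using tens_in_Lfun by (cases k) auto
    then show "fs.subspace ((\<lambda>(i, lam). block_sub n X p i lam) k) \<and>
      (\<lambda>(i, lam). block_sub n X p i lam) k \<subseteq> Lfun (prodX n X)"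
      unfolding span[OF k] using fs.subspace_span fs.span_minimal[OF _ Lfun_subspace] by blast
  qed
  show "\<forall>k\<in>block_index. \<forall>k'\<in>block_index. k \<noteq> k' \<longrightarrow> (\<forall>u\<in>(\<lambda>(i, lam). block_sub n X p i lam) k.
      \<forall>v\<in>(\<lambda>(i, lam). block_sub n X p i lam) k'. wdot (prodX n X) (prod_weight n \<pi>) u v = 0)"
  proof (intro ballI impI)
    fix k k' u v
    assume "k \<in> block_index" "k' \<in> block_index" "k \<noteq> k'"
      and "u \<in> (\<lambda>(i, lam). block_sub n X p i lam) k" "v \<in> (\<lambda>(i, lam). block_sub n X p i lam) k'"
    moreover obtain i lam i' lam' where "k = (i, lam)" "k' = (i', lam')" by (cases k, cases k')
    ultimately show "wdot (prodX n X) (prod_weight n \<pi>) u v = 0"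
      using blocks_orthogonal[of i lam i' lam' u v] by simp
  qed
  note cover = Lfun_subset_span_blocks
  show "\<forall>f\<in>Lfun (prodX n X). \<exists>g. (\<forall>k\<in>block_index. g k \<in> (\<lambda>(i, lam). block_sub n X p i lam) k) \<and>
      f = (\<Sum>k\<in>block_index. g k)"
  proof
    fix f assume "f \<in> Lfun (prodX n X)"
    with cover have "f \<in> fs.span (\<Union>k\<in>block_index. ?T k)" by blast
    from span_UN_decompose[OF finite_block_index this]
    obtain g where "\<forall>k\<in>block_index. g k \<in> fs.span (?T k)" "f = (\<Sum>k\<in>block_index. g k)"
      by blast
    then show "\<exists>g. (\<forall>k\<in>block_index. g k \<in> (\<lambda>(i, lam). block_sub n X p i lam) k) \<and>
      f = (\<Sum>k\<in>block_index. g k)"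
      using span by (intro exI[of _ g]) (simp del: fscale_apply)
  qed
qed

lemma block_sub_eigen_dim:
  assumes i: "i \<in> {1..n}" and c: "i = 1 \<or> lam \<noteq> 1"
  shows "(\<forall>f\<in>block_sub n X p i lam. apply_kernel (prodX n X) (nested_kernel n X p0 p) f
            = fscale (p0 i * lam + (\<Sum>k\<in>{i<..n}. p0 k)) f)
    \<and> fs.dim (block_sub n X p i lam) = (\<Prod>j\<in>{1..<i}. card (X j)) * fs.dim (eigspace (X i) (p i) lam)"
  using block_sub_subset_eigspace[OF i c] dim_block_sub[OF i] by (auto simp: eigspace_def)

lemma eigen_dim_last_factor:
  "\<forall>lam\<in>eigvals (X n) (p n) - {1}.
     (\<forall>f\<in>block_sub n X p n lam. apply_kernel (prodX n X) (nested_kernel n X p0 p) f = fscale (p0 n * lam) f)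
     \<and> fs.dim (block_sub n X p n lam) = (\<Prod>j\<in>{1..<n}. card (X j)) * fs.dim (eigspace (X n) (p n) lam)"
  using block_sub_eigen_dim[of n] n1 by simp

lemma eigen_dim_middle_factors:
  "\<forall>j\<in>{1..n-2}. \<forall>lam\<in>eigvals (X (j+1)) (p (j+1)) - {1}.
     (\<forall>f\<in>block_sub n X p (j+1) lam. apply_kernel (prodX n X) (nested_kernel n X p0 p) f
        = fscale (p0 (j+1) * lam + (\<Sum>i\<in>{j+2..n}. p0 i)) f)
     \<and> fs.dim (block_sub n X p (j+1) lam) = (\<Prod>i\<in>{1..j}. card (X i)) * fs.dim (eigspace (X (j+1)) (p (j+1)) lam)"
proof (intro ballI)
  fix j lam assume j: "j \<in> {1..n-2}" and "lam \<in> eigvals (X (j+1)) (p (j+1)) - {1}"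
  moreover have "{j+1<..n} = {j+2..n}" "{1..<j+1} = {1..j}" by auto
  ultimately show "(\<forall>f\<in>block_sub n X p (j+1) lam. apply_kernel (prodX n X) (nested_kernel n X p0 p) f
        = fscale (p0 (j+1) * lam + (\<Sum>i\<in>{j+2..n}. p0 i)) f)
     \<and> fs.dim (block_sub n X p (j+1) lam) = (\<Prod>i\<in>{1..j}. card (X i)) * fs.dim (eigspace (X (j+1)) (p (j+1)) lam)"
    using block_sub_eigen_dim[of "j+1" lam] by (simp only:) auto
qed

lemma eigen_dim_first_factor:
  "\<forall>lam\<in>eigvals (X 1) (p 1).
     (\<forall>f\<in>block_sub n X p 1 lam. apply_kernel (prodX n X) (nested_kernel n X p0 p) f
        = fscale (p0 1 * lam + (\<Sum>i\<in>{2..n}. p0 i)) f)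
     \<and> fs.dim (block_sub n X p 1 lam) = fs.dim (eigspace (X 1) (p 1) lam)"
proof -
  have "{1<..n} = {2..n}" by auto
  then show ?thesis using block_sub_eigen_dim[of 1] n1 by simp
qed

lemma block_index_eq:
  "{(n, lam) | lam. lam \<in> eigvals (X n) (p n) - {1}}
    \<union> {(j+1, lam) | j lam. j \<in> {1..n-2} \<and> lam \<in> eigvals (X (j+1)) (p (j+1)) - {1}}
    \<union> {(1, lam) | lam. lam \<in> eigvals (X 1) (p 1)} = block_index"
proof (intro equalityI subsetI)
  fix k assume "k \<in> block_index"
  then obtain i lam where k: "k = (i, lam)" "i \<in> {1..n}" "lam \<in> eigvals (X i) (p i)" "i = 1 \<or> lam \<noteq> 1"
    by (auto simp: block_index_def)
  consider "i = 1" | "i = n" | "1 < i" "i < n" using k(2) by fastforce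
  then show "k \<in> {(n, lam) | lam. lam \<in> eigvals (X n) (p n) - {1}}
    \<union> {(j+1, lam) | j lam. j \<in> {1..n-2} \<and> lam \<in> eigvals (X (j+1)) (p (j+1)) - {1}}
    \<union> {(1, lam) | lam. lam \<in> eigvals (X 1) (p 1)}"
  proof cases
    case 3
    then have "(i, lam) \<in> {(j+1, lam) | j lam. j \<in> {1..n-2} \<and> lam \<in> eigvals (X (j+1)) (p (j+1)) - {1}}"
      using k by (intro CollectI exI[of _ "i - 1"] exI[of _ lam]) auto
    then show ?thesis using k(1) by blast
  qed (use k in auto)
qed (use n1 in \<open>auto simp: block_index_def\<close>)

end

theorem proposition6p1:
  fixes n :: nat and X :: "nat \<Rightarrow> 'a set" and p :: "nat \<Rightarrow> 'a \<Rightarrow> 'a \<Rightarrow> real"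
    and \<pi> :: "nat \<Rightarrow> 'a \<Rightarrow> real" and p0 :: "nat \<Rightarrow> real"
  assumes n2: "n \<ge> 2"
    and fin: "\<forall>i\<in>{1..n}. finite (X i)"
    and stoch: "\<forall>i\<in>{1..n}. stochastic (X i) (p i)"
    and irr: "\<forall>i\<in>{1..n}. irreducible_kernel (X i) (p i)"
    and pos: "\<forall>i\<in>{1..n}. positive_prob (X i) (\<pi> i)"
    and db: "\<forall>i\<in>{1..n}. detailed_balance (X i) (\<pi> i) (p i)"
    and sym: "\<forall>i\<in>{2..n}. \<forall>x\<in>X i. \<forall>y\<in>X i. p i x y = p i y x"
    and p0pos: "\<forall>i\<in>{1..n}. p0 i > 0"
    and p0sum: "(\<Sum>i\<in>{1..n}. p0 i) = 1"
  defines "P \<equiv> apply_kernel (prodX n X) (nested_kernel n X p0 p)"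
  shows
    "(\<forall>lam\<in>eigvals (X n) (p n) - {1}.
        (\<forall>f\<in>block_sub n X p n lam. P f = fscale (p0 n * lam) f) \<and>
        vector_space.dim fscale (block_sub n X p n lam)
          = (\<Prod>j\<in>{1..<n}. card (X j)) * vector_space.dim fscale (eigspace (X n) (p n) lam))
   \<and> (\<forall>j\<in>{1..n-2}. \<forall>lam\<in>eigvals (X (j+1)) (p (j+1)) - {1}.
        (\<forall>f\<in>block_sub n X p (j+1) lam.
            P f = fscale (p0 (j+1) * lam + (\<Sum>i\<in>{j+2..n}. p0 i)) f) \<and>
        vector_space.dim fscale (block_sub n X p (j+1) lam)
          = (\<Prod>i\<in>{1..j}. card (X i)) * vector_space.dim fscale (eigspace (X (j+1)) (p (j+1)) lam))
   \<and> (\<forall>lam\<in>eigvals (X 1) (p 1).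
        (\<forall>f\<in>block_sub n X p 1 lam. P f = fscale (p0 1 * lam + (\<Sum>i\<in>{2..n}. p0 i)) f) \<and>
        vector_space.dim fscale (block_sub n X p 1 lam)
          = vector_space.dim fscale (eigspace (X 1) (p 1) lam))
   \<and> is_direct_sum (Lfun (prodX n X))
       ({(n, lam) | lam. lam \<in> eigvals (X n) (p n) - {1}}
        \<union> {(j+1, lam) | j lam. j \<in> {1..n-2} \<and> lam \<in> eigvals (X (j+1)) (p (j+1)) - {1}}
        \<union> {(1, lam) | lam. lam \<in> eigvals (X 1) (p 1)})
       (\<lambda>(i, lam). block_sub n X p i lam)"
proof -
  have "\<forall>i\<in>{1..n}. \<exists>Bev. orth_eigenbasis (X i) (\<pi> i) (p i) (fst Bev) (snd Bev)"
    using fin pos db by (metis orth_eigenbasis_exists positive_prob_def fst_conv snd_conv)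
  then obtain Bev where "\<forall>i\<in>{1..n}. orth_eigenbasis (X i) (\<pi> i) (p i) (fst (Bev i)) (snd (Bev i))"
    by metis
  then interpret nested_product n X p \<pi> p0 "\<lambda>i. fst (Bev i)" "\<lambda>i. snd (Bev i)"
    using n2 fin stoch irr pos db sym by unfold_locales auto
  show ?thesis
    unfolding P_def block_index_eq
    using eigen_dim_last_factor eigen_dim_middle_factors eigen_dim_first_factor is_direct_sum_blocks
    by blast
qed

end
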